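(* Let $q$ be a prime power and $d$ an integer with $5\le d\le q$; put $n=q+1$. Let $\mathcal C$ be the $[q+1,q+2-d,d]_q$ normalized generalized doubly extended Reed--Solomon (GDRS) code. Let $\mathcal V^{(2)}$ be a coset of weight $2$ of $\mathcal C$ with coset leader $\mathbf v_2(j_1,j_2;\gamma_1,\gamma_2)$, and let $\beta$ be a primitive element of $\mathbb F_q$ and $\lambda_0\in\mathbb Z_{q-1}$ be such that $\beta^{\lambda_0}=-\gamma_2/\gamma_1$. Then the weight distribution of $\mathcal V^{(2)}$ does not depend on the positions $j_1,j_2$, and: (i) $B_w(\mathcal V^{(2)})=0$ for $w\in\{0,1,\dots,d-3\}\setminus\{2\}$; $B_2(\mathcal V^{(2)})=1$; $B_{d-2}(\mathcal V^{(2)})=\mathrm P^+_{q-1,d-2}(\lambda_0)=\mathrm P^\times_{q,d-2}(-\gamma_2/\gamma_1)$; and for $w=d-1,d,\dots,q+1$, $$B_w(\mathcal V^{(2)})=A_w(\mathcal C)-\Omega^{(0)}_w+\Omega^{(2)}_w+(-1)^{w-d}\binom{q+3-d}{q+1-w}\mathrm P^+_{q-1,d-2}(\lambda_0).$$ (ii) The value $\mathrm P^+_{q-1,d-2}(\lambda)$ is the same for all $\lambda\in\mathbb Z_{q-1}$ if and only if all $\binom{n}{2}(q-1)^2$ cosets of weight $2$ of $\mathcal C$ have the same weight distribution; and in that case, for every coset $\mathcal V^{(2)}$ of weight $2$: $B_w(\mathcal V^{(2)})=0$ for $w\in\{0,\dots,d-3\}\setminus\{2\}$, $B_2(\mathcal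 V^{(2)})=1$, $B_{d-2}(\mathcal V^{(2)})=\frac{1}{q-1}\binom{q-1}{d-2}=\frac{1}{d-2}\binom{q-2}{d-3}$, and for $w=d-1,\dots,q+1$, $$B_w(\mathcal V^{(2)})=A_w(\mathcal C)-\Omega^{(0)}_w+\Omega^{(2)}_w+(-1)^{w-d}\binom{q+3-d}{q+1-w}\cdot\frac{1}{q-1}\binom{q-1}{d-2}.$$ (iii) If $\gcd(q-1,d-2)=1$, then $\mathrm P^+_{q-1,d-2}(\lambda)$ is the same for all $\lambda\in\mathbb Z_{q-1}$, all $\binom n2(q-1)^2$ cosets of weight $2$ have the same weight distribution, all formulas of (ii) hold, the code $\mathcal C$ is $2$-regular, and $\frac{1}{q-1}\binom{q-1}{d-2}=\frac{1}{d-2}\binom{q-2}{d-3}$ is an integer.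
   Context: Normalized GDRS code: the $\mathbb F_q$-linear code of length $q+1$ which is the kernel of the $(d-1)\times(q+1)$ parity check matrix whose first $q$ columns are $(1,m,m^2,\dots,m^{d-2})^{T}$ for $m$ running over all elements of $\mathbb F_q$ (the nonzero ones $m_1,\dots,m_{q-1}$ and then $m_q=0$) and whose last column is $(0,\dots,0,1)^{T}$; it is an MDS code with minimum distance $d$. A coset of a code $\mathcal C$ is $\mathbf v+\mathcal C$; its weight is the minimum Hamming weight of its vectors, and a coset leader is a vector of minimal weight. $\mathbf v_2(j_1,j_2;\gamma_1,\gamma_2)$ denotes the vector of $\mathbb F_q^{q+1}$ with entries $\gamma_1,\gamma_2\in\mathbb F_q^*$ in positions $j_1\ne j_2$ and zeros elsewhere. $B_w(\mathcal V)$ is the number of vectors of Hamming weight $w$ in the coset $\mathcal V$; $A_w(\mathcal C)$ is the number of codewords of weight $w$, given by $A_w(\mathcal C)=\binom{n}{w}\sum_{j=0}^{w-d}(-1)^j\binom wj(q^{w-d+1-j}-1)$ for $w\ge d$ and $0$ for $0<w<d$. Further $\Omega^{(0)}_w=(-1)^{w-d}\binom{q+1}{w}\binom{w-1}{d-2}$ and $\Omega^{(2)}_w=(-1)^{w-d}\binom{q-1}{w-2}\binom{w-3}{d-4}$. For positive integers $\mu<R$ and $\lambda\in\mathbb Z_R$ (integers mod $R$), $\mathrm P^+_{R,\mu}(\lambda)$ is the number of $\mu$-element subsets $\{\lambda_1,\dots,\lambda_\mu\}\subset\mathbb Z_R$ (distinct elements) with $\lambda_1+\dots+\lambda_\mu=\lambda$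 in $\mathbb Z_R$. For $\mu<q-1$ and $\gamma\in\mathbb F_q^*$, $\mathrm P^\times_{q,\mu}(\gamma)$ is the number of $\mu$-element subsets $\{\alpha_1,\dots,\alpha_\mu\}\subset\mathbb F_q^*$ with $\alpha_1\cdots\alpha_\mu=\gamma$. A code is $2$-regular if for every $W\in\{0,1,2\}$ all cosets of weight $W$ have the same weight distribution. *)

theory Defs
  imports Complex_Main
begin

text \<open>Vectors of length n over a field are functions nat => 'a vanishing outside {..<n};
 positions are 0..n-1 (position j corresponds to the paper's j+1).\<close>

definition vecs :: "nat \<Rightarrow> (nat \<Rightarrow> 'a::zero) set" where
  "vecs n = {v. \<forall>j\<ge>n. v j = 0}"

definition hw :: "nat \<Rightarrow> (nat \<Rightarrow> 'a::zero) \<Rightarrow> nat" where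
  "hw n v = card {j. j < n \<and> v j \<noteq> 0}"

text \<open>Normalized GDRS code of length q+1: m 0, ..., m (q-1) enumerate the field with
 m (q-1) = 0 (columns 1..q of the paper); position q is the column (0,...,0,1)^T.
 Row i (i = 0..d-2) of the parity check matrix has entries m j ^ i (0^0 = 1).\<close>

definition gdrs_code :: "(nat \<Rightarrow> 'a::field) \<Rightarrow> nat \<Rightarrow> nat \<Rightarrow> (nat \<Rightarrow> 'a) set" where
  "gdrs_code m q d = {v \<in> vecs (q+1). \<forall>i < d - 1.
      (\<Sum>j<q. m j ^ i * v j) + (if i = d - 2 then v q else 0) = 0}"

definition coset_of :: "(nat \<Rightarrow> 'a::field) set \<Rightarrow> (nat \<Rightarrow> 'a) \<Rightarrow> (nat \<Rightarrow> 'a) set" where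
  "coset_of C v = (\<lambda>c. (\<lambda>j. v j + c j)) ` C"

definition is_coset :: "nat \<Rightarrow> (nat \<Rightarrow> 'a::field) set \<Rightarrow> (nat \<Rightarrow> 'a) set \<Rightarrow> bool" where
  "is_coset n C V \<longleftrightarrow> (\<exists>v \<in> vecs n. V = coset_of C v)"

definition coset_weight :: "nat \<Rightarrow> (nat \<Rightarrow> 'a::zero) set \<Rightarrow> nat" where
  "coset_weight n V = Min (hw n ` V)"

definition B :: "nat \<Rightarrow> nat \<Rightarrow> (nat \<Rightarrow> 'a::zero) set \<Rightarrow> nat" where
  "B n w V = card {x \<in> V. hw n x = w}"

definition same_wd :: "nat \<Rightarrow> (nat \<Rightarrow> 'a::zero) set \<Rightarrow> (nat \<Rightarrow> 'a) set \<Rightarrow> bool" where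
  "same_wd n V V' \<longleftrightarrow> (\<forall>w. B n w V = B n w V')"

definition all_cosets_same_wd :: "nat \<Rightarrow> (nat \<Rightarrow> 'a::field) set \<Rightarrow> nat \<Rightarrow> bool" where
  "all_cosets_same_wd n C W \<longleftrightarrow> (\<forall>V V'. is_coset n C V \<and> is_coset n C V'
      \<and> coset_weight n V = W \<and> coset_weight n V' = W \<longrightarrow> same_wd n V V')"

definition two_regular :: "nat \<Rightarrow> (nat \<Rightarrow> 'a::field) set \<Rightarrow> bool" where
  "two_regular n C \<longleftrightarrow> (\<forall>W \<in> {0,1,2}. all_cosets_same_wd n C W)"

definition v2 :: "nat \<Rightarrow> nat \<Rightarrow> 'a::zero \<Rightarrow> 'a \<Rightarrow> nat \<Rightarrow> 'a" where
  "v2 j1 j2 g1 g2 = (\<lambda>j. if j = j1 then g1 else if j = j2 then g2 else 0)"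

definition Pplus :: "nat \<Rightarrow> nat \<Rightarrow> nat \<Rightarrow> nat" where
  "Pplus R \<mu> l = card {S. S \<subseteq> {..<R} \<and> card S = \<mu> \<and> (\<Sum>S) mod R = l}"

definition Ptimes :: "nat \<Rightarrow> 'a::{field,finite} \<Rightarrow> nat" where
  "Ptimes \<mu> g = card {S :: 'a set. 0 \<notin> S \<and> card S = \<mu> \<and> (\<Prod>S) = g}"

definition neg1pow :: "int \<Rightarrow> int" where
  "neg1pow k = (if even k then 1 else -1)"

definition Omega0 :: "nat \<Rightarrow> nat \<Rightarrow> nat \<Rightarrow> int" where
  "Omega0 q d w = neg1pow (int w - int d) * int ((q+1) choose w) * int ((w-1) choose (d-2))"

definition Omega2 :: "nat \<Rightarrow> nat \<Rightarrow> nat \<Rightarrow> int" where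
  "Omega2 q d w = neg1pow (int w - int d) * int ((q-1) choose (w-2)) * int ((w-3) choose (d-4))"

text \<open>The formulas of part (ii) for a coset V of weight 2 (A_w(C) = B n w C).\<close>
definition formulas_ii :: "nat \<Rightarrow> nat \<Rightarrow> (nat \<Rightarrow> 'a::field) set \<Rightarrow> (nat \<Rightarrow> 'a) set \<Rightarrow> bool" where
  "formulas_ii q d C V \<longleftrightarrow>
     (\<forall>w. w \<le> d - 3 \<and> w \<noteq> 2 \<longrightarrow> B (q+1) w V = 0) \<and>
     B (q+1) 2 V = 1 \<and>
     real (B (q+1) (d-2) V) = real ((q-1) choose (d-2)) / real (q-1) \<and>
     real ((q-1) choose (d-2)) / real (q-1) = real ((q-2) choose (d-3)) / real (d-2) \<and>
     (\<forall>w. d - 1 \<le> w \<and> w \<le> q + 1 \<longrightarrow>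
        real (B (q+1) w V) = real_of_int (int (B (q+1) w C) - Omega0 q d w + Omega2 q d w)
          + real_of_int (neg1pow (int w - int d) * int ((q+3-d) choose (q+1-w)))
            * (real ((q-1) choose (d-2)) / real (q-1)))"

end

(* A GDRS code C is MDS: it is the kernel of d - 1 parity checks and has minimum distance d.
   A coset V of an MDS code and the code itself contain equally many vectors supported on any
   set of at least d - 1 positions, so Moebius inversion over supports expresses B_w(V) - A_w(C),
   for w >= d - 1, through the numbers B_a(V) with a <= d - 2 alone.  For the coset of a
   weight-2 vector v with support {j1, j2} these are B_2 = 1 and B_(d-2), the number of vectors y
   of weight d - 2 in V; their supports S avoid {j1, j2}, and y - v is, up to scaling, the only
   codeword supported on S union {j1, j2}.  The duality of C with polynomials of degree at most
   d - 2 shows that such y exists iff prod_(k in S) [j1,k]/[j2,k] = -g2/g1, where [j,k] is the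
   determinant of the points of the projective line indexed by j and k.  By the Pluecker relation
   k |-> [j1,k]/[j2,k] maps the q - 1 remaining positions bijectively onto F_q^*, so
   B_(d-2) = P^x_(q,d-2)(-g2/g1), which equals P^+_(q-1,d-2)(lambda0) via discrete logarithms.
   Translating a subset of Z_(q-1) by 1 adds d - 2 to its sum, so P^+ is constant when
   gcd (q - 1) (d - 2) = 1. *)

theory Submission
  imports Defs "HOL-Computational_Algebra.Polynomial" "HOL-Library.FuncSet" "HOL-Number_Theory.Cong"
begin

definition supp :: "nat \<Rightarrow> (nat \<Rightarrow> 'a::zero) \<Rightarrow> nat set" where
  "supp n x = {j. j < n \<and> x j \<noteq> 0}"

lemma finite_supp [simp]: "finite (supp n x)"
  by (simp add: supp_def)

lemma supp_subset: "supp n x \<subseteq> {..<n}"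
  by (auto simp: supp_def)

lemma mem_supp_less: "j \<in> supp n x \<Longrightarrow> j < n"
  by (simp add: supp_def)

lemma hw_eq_card_supp: "hw n x = card (supp n x)"
  by (simp add: hw_def supp_def)

lemma supp_diff_subset:
  fixes x y :: "nat \<Rightarrow> 'a::group_add"
  shows "supp n (\<lambda>j. x j - y j) \<subseteq> supp n x \<union> supp n y"
  by (auto simp: supp_def)

lemma supp_add_subset:
  fixes x y :: "nat \<Rightarrow> 'a::monoid_add"
  shows "supp n (\<lambda>j. x j + y j) \<subseteq> supp n x \<union> supp n y"
  by (auto simp: supp_def)

lemma card_functions_with_values:
  fixes A :: "'b \<Rightarrow> 'a::zero set"
  assumes "finite U"
  shows "card {x. (\<forall>j\<in>U. x j \<in> A j) \<and> (\<forall>j. j \<notin> U \<longrightarrow> x j = 0)} = (\<Prod>j\<in>U. card (A j))"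
proof -
  let ?ext = "\<lambda>f j. if j \<in> U then f j else 0"
  have "{x. (\<forall>j\<in>U. x j \<in> A j) \<and> (\<forall>j. j \<notin> U \<longrightarrow> x j = 0)} = ?ext ` PiE U A"
  proof (intro set_eqI iffI)
    fix x assume x: "x \<in> {x. (\<forall>j\<in>U. x j \<in> A j) \<and> (\<forall>j. j \<notin> U \<longrightarrow> x j = 0)}"
    then have "x = ?ext (restrict x U)"
      by auto
    with x show "x \<in> ?ext ` PiE U A"
      by (intro image_eqI) auto
  qed auto
  moreover have "inj_on ?ext (PiE U A)"
    by (intro inj_onI ext) (metis PiE_E)
  ultimately show ?thesis
    by (simp add: card_image card_PiE assms)
qed

definition supported_on :: "'b set \<Rightarrow> ('b \<Rightarrow> 'a::zero) set" where
  "supported_on U = {x. \<forall>j. j \<notin> U \<longrightarrow> x j = 0}"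

lemma card_supported_on:
  "finite U \<Longrightarrow> card (supported_on U :: ('b \<Rightarrow> 'a::{zero,finite}) set) = card (UNIV :: 'a set) ^ card U"
  using card_functions_with_values[of U "\<lambda>_. UNIV"] by (simp add: supported_on_def)

lemma finite_supported_on:
  "finite U \<Longrightarrow> finite (supported_on U :: ('b \<Rightarrow> 'a::{zero,finite}) set)"
proof -
  assume "finite U"
  then have "card (supported_on U :: ('b \<Rightarrow> 'a) set) > 0"
    by (simp add: card_supported_on finite_UNIV_card_ge_0)
  then show ?thesis
    by (rule card_ge_0_finite)
qed

lemma vecs_eq_supported_on: "vecs n = supported_on {..<n}"
  by (auto simp: vecs_def supported_on_def)

lemma supported_on_subset_vecs: "U \<subseteq> {..<n} \<Longrightarrow> supported_on U \<subseteq> vecs n"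
  unfolding vecs_eq_supported_on supported_on_def by blast

lemma supp_diff_subset_supported_on:
  fixes x y :: "nat \<Rightarrow> 'a::group_add"
  shows "x \<in> supported_on U \<Longrightarrow> y \<in> supported_on U \<Longrightarrow> supp n (\<lambda>j. x j - y j) \<subseteq> U"
  unfolding supp_def supported_on_def by fastforce

lemma finite_vecs: "finite (vecs n :: (nat \<Rightarrow> 'a::{zero,finite}) set)"
  by (simp add: vecs_eq_supported_on finite_supported_on)

lemma supp_subset_iff: "x \<in> vecs n \<Longrightarrow> supp n x \<subseteq> U \<longleftrightarrow> x \<in> supported_on U"
  unfolding supp_def vecs_def supported_on_def by (auto simp: subset_iff) (metis not_less)

lemma supp_eq_empty_iff: "x \<in> vecs n \<Longrightarrow> supp n x = {} \<longleftrightarrow> x = (\<lambda>_. 0)"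
  using supp_subset_iff[of x n "{}"] by (auto simp: supported_on_def)

lemma card_vecs_with_supp:
  assumes "T \<subseteq> {..<n}"
  shows "card {x :: nat \<Rightarrow> 'a::{zero,finite}. x \<in> vecs n \<and> supp n x = T} = (card (UNIV :: 'a set) - 1) ^ card T"
proof -
  have "{x :: nat \<Rightarrow> 'a. x \<in> vecs n \<and> supp n x = T} =
      {x. (\<forall>j\<in>T. x j \<in> UNIV - {0}) \<and> (\<forall>j. j \<notin> T \<longrightarrow> x j = 0)}"
    using assms by (auto simp: vecs_def supp_def)
  moreover have "finite T"
    using assms finite_subset by blast
  ultimately show ?thesis
    using card_functions_with_values[of T "\<lambda>_. UNIV - {0 :: 'a}"] by (simp add: card_Diff_subset)
qed

lemma v2_in_vecs: "j1 < n \<Longrightarrow> j2 < n \<Longrightarrow> v2 j1 j2 g1 g2 \<in> vecs n"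
  by (simp add: v2_def vecs_def)

lemma supp_v2:
  "j1 < n \<Longrightarrow> j2 < n \<Longrightarrow> j1 \<noteq> j2 \<Longrightarrow> g1 \<noteq> 0 \<Longrightarrow> g2 \<noteq> 0 \<Longrightarrow> supp n (v2 j1 j2 g1 g2) = {j1, j2}"
  by (auto simp: supp_def v2_def)

lemma hw_v2:
  "j1 < n \<Longrightarrow> j2 < n \<Longrightarrow> j1 \<noteq> j2 \<Longrightarrow> g1 \<noteq> 0 \<Longrightarrow> g2 \<noteq> 0 \<Longrightarrow> hw n (v2 j1 j2 g1 g2) = 2"
  by (simp add: hw_eq_card_supp supp_v2)

lemma hw_eq_2_imp_v2:
  assumes "y \<in> vecs n" "hw n y = 2"
  obtains j1 j2 where "j1 < n" "j2 < n" "j1 \<noteq> j2" "y j1 \<noteq> 0" "y j2 \<noteq> 0" "y = v2 j1 j2 (y j1) (y j2)"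
proof -
  obtain j1 j2 where j: "supp n y = {j1, j2}" "j1 \<noteq> j2"
    using assms(2) by (auto simp: hw_eq_card_supp card_Suc_eq numeral_eq_Suc)
  then have "j1 < n" "j2 < n" "y j1 \<noteq> 0" "y j2 \<noteq> 0"
    by (auto simp: supp_def)
  moreover have "y = v2 j1 j2 (y j1) (y j2)"
    using supp_subset_iff[OF assms(1), of "{j1, j2}"] j by (auto simp: supported_on_def v2_def)
  ultimately show thesis
    using j that by blast
qed

section \<open>Counting subsets\<close>

lemma card_supersets:
  assumes N: "finite N" and S: "S \<subseteq> N" "card S \<le> w"
  shows "card {T. T \<subseteq> N \<and> card T = w \<and> S \<subseteq> T} = (card N - card S) choose (w - card S)"
proof -
  have fS: "finite S"
    using N S finite_subset by blast
  have "bij_betw (\<lambda>T'. S \<union> T') {T'. T' \<subseteq> N - S \<and> card T' = w - card S}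
      {T. T \<subseteq> N \<and> card T = w \<and> S \<subseteq> T}"
  proof (rule bij_betwI[where g = "\<lambda>T. T - S"])
    show "(\<lambda>T'. S \<union> T') \<in> {T'. T' \<subseteq> N - S \<and> card T' = w - card S} \<rightarrow> {T. T \<subseteq> N \<and> card T = w \<and> S \<subseteq> T}"
    proof
      fix T' assume T': "T' \<in> {T'. T' \<subseteq> N - S \<and> card T' = w - card S}"
      then have "card (S \<union> T') = card S + card T'"
        using N fS by (intro card_Un_disjoint) (auto intro: finite_subset)
      with T' S show "S \<union> T' \<in> {T. T \<subseteq> N \<and> card T = w \<and> S \<subseteq> T}"
        by auto
    qed
    show "(\<lambda>T. T - S) \<in> {T. T \<subseteq> N \<and> card T = w \<and> S \<subseteq> T} \<rightarrow> {T'. T' \<subseteq> N - S \<and> card T' = w - card S}"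
      using fS by (auto simp: card_Diff_subset)
  qed auto
  then have "card {T. T \<subseteq> N \<and> card T = w \<and> S \<subseteq> T} = card {T'. T' \<subseteq> N - S \<and> card T' = w - card S}"
    by (simp add: bij_betw_same_card)
  also have "\<dots> = (card N - card S) choose (w - card S)"
    using N S fS by (simp add: n_subsets card_Diff_subset)
  finally show ?thesis .
qed

lemma sum_Pow_by_card:
  fixes f :: "nat \<Rightarrow> 'b::semiring_1"
  assumes "finite T"
  shows "(\<Sum>U\<in>Pow T. f (card U)) = (\<Sum>k\<le>card T. of_nat (card T choose k) * f k)"
proof -
  have "(\<Sum>U\<in>Pow T. f (card U)) = (\<Sum>k\<le>card T. \<Sum>U\<in>{U\<in>Pow T. card U = k}. f (card U))"
    using assms by (intro sum.group[symmetric]) (auto simp: card_mono)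
  also have "\<dots> = (\<Sum>k\<le>card T. of_nat (card T choose k) * f k)"
  proof (intro sum.cong refl)
    fix k
    have "{U\<in>Pow T. card U = k} = {U. U \<subseteq> T \<and> card U = k}"
      by auto
    then show "(\<Sum>U\<in>{U\<in>Pow T. card U = k}. f (card U)) = of_nat (card T choose k) * f k"
      using assms by (simp add: n_subsets)
  qed
  finally show ?thesis .
qed

lemma sum_alternating_choose_upto:
  assumes "0 < t"
  shows "(\<Sum>k\<le>e. (-1) ^ k * of_nat (t choose k)) = (-1) ^ e * (of_nat ((t - 1) choose e) :: 'a::comm_ring_1)"
proof (induction e)
  case (Suc e)
  obtain s where t: "t = Suc s"
    using assms by (cases t) auto
  from Suc show ?case
    by (simp add: t algebra_simps)
qed simp

lemma sum_Pow_alternating_truncated: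
  assumes T: "finite T" and e: "e < card T"
  shows "(\<Sum>U\<in>Pow T. if card U \<le> e then (-1::int) ^ (card T - card U) else 0)
    = (-1) ^ (card T + e) * int ((card T - 1) choose e)"
proof -
  let ?t = "card T"
  have "(\<Sum>U\<in>Pow T. if card U \<le> e then (-1::int) ^ (?t - card U) else 0)
      = (\<Sum>k\<le>?t. of_nat (?t choose k) * (if k \<le> e then (-1) ^ (?t - k) else 0))"
    using sum_Pow_by_card[OF T, of "\<lambda>k. if k \<le> e then (-1::int) ^ (?t - k) else 0"] .
  also have "\<dots> = (\<Sum>k\<le>e. (-1) ^ ?t * ((-1) ^ k * of_nat (?t choose k)))"
  proof (rule sum.mono_neutral_cong_right)
    fix k assume "k \<in> {..e}"
    then have "(-1::int) ^ (?t - k) = (-1) ^ (?t + k)"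
      using e by (simp add: neg_one_power_add_eq_neg_one_power_diff)
    then show "of_nat (?t choose k) * (if k \<le> e then (-1) ^ (?t - k) else 0)
        = (-1) ^ ?t * ((-1) ^ k * (of_nat (?t choose k) :: int))"
      using \<open>k \<in> {..e}\<close> by (simp add: power_add)
  qed (use e in auto)
  also have "\<dots> = (-1) ^ ?t * ((-1) ^ e * int ((?t - 1) choose e))"
    using e by (simp add: sum_distrib_left[symmetric] sum_alternating_choose_upto)
  finally show ?thesis
    by (simp add: power_add)
qed

lemma sum_supersets_eq_sum_Pow_Diff:
  assumes "S \<subseteq> T"
  shows "(\<Sum>U\<in>{U \<in> Pow T. S \<subseteq> U}. f U) = (\<Sum>U'\<in>Pow (T - S). f (S \<union> U'))"
proof -
  have "{U \<in> Pow T. S \<subseteq> U} = (\<lambda>U'. S \<union> U') ` Pow (T - S)"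
  proof (intro set_eqI iffI)
    fix U assume "U \<in> {U \<in> Pow T. S \<subseteq> U}"
    then have "U = S \<union> (U - S)" "U - S \<in> Pow (T - S)"
      by auto
    then show "U \<in> (\<lambda>U'. S \<union> U') ` Pow (T - S)"
      by blast
  qed (use assms in auto)
  moreover have "inj_on (\<lambda>U'. S \<union> U') (Pow (T - S))"
    by (rule inj_onI) auto
  ultimately show ?thesis
    by (simp add: sum.reindex)
qed

lemma sum_supersets_alternating_truncated:
  assumes T: "finite T" and S: "S \<subseteq> T" "card S \<le> e" and e: "e < card T"
  shows "(\<Sum>U\<in>Pow T. if card U \<le> e \<and> S \<subseteq> U then (-1::int) ^ (card T - card U) else 0)
    = (-1) ^ (card T + e) * int ((card T - card S - 1) choose (e - card S))"
proof -
  let ?a = "card S"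
  have fS: "finite S"
    using T S finite_subset by blast
  have cTS: "card (T - S) = card T - ?a"
    using S fS by (simp add: card_Diff_subset)
  have "(\<Sum>U\<in>Pow T. if card U \<le> e \<and> S \<subseteq> U then (-1::int) ^ (card T - card U) else 0)
      = (\<Sum>U\<in>{U \<in> Pow T. S \<subseteq> U}. if card U \<le> e then (-1) ^ (card T - card U) else 0)"
    using T by (subst sum.inter_filter) (auto intro!: sum.cong)
  also have "\<dots> = (\<Sum>U'\<in>Pow (T - S). if card (S \<union> U') \<le> e then (-1) ^ (card T - card (S \<union> U')) else 0)"
    by (rule sum_supersets_eq_sum_Pow_Diff[OF S(1)])
  also have "\<dots> = (\<Sum>U'\<in>Pow (T - S). if card U' \<le> e - ?a then (-1) ^ (card (T - S) - card U') else 0)"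
  proof (intro sum.cong refl)
    fix U' assume "U' \<in> Pow (T - S)"
    then have "card (S \<union> U') = ?a + card U'"
      using fS T by (intro card_Un_disjoint) (auto intro: finite_subset)
    then show "(if card (S \<union> U') \<le> e then (-1::int) ^ (card T - card (S \<union> U')) else 0)
        = (if card U' \<le> e - ?a then (-1) ^ (card (T - S) - card U') else 0)"
      using S(2) cTS by auto
  qed
  also have "\<dots> = (-1) ^ (card (T - S) + (e - ?a)) * int ((card (T - S) - 1) choose (e - ?a))"
    using T cTS S(2) e by (intro sum_Pow_alternating_truncated) auto
  also have "(-1::int) ^ (card (T - S) + (e - ?a)) = (-1) ^ (card T + e)"
  proof -
    have "card T + e = (card (T - S) + (e - ?a)) + 2 * ?a"
      using cTS S(2) e by simp
    then show ?thesis
      by (simp add: power_add power_mult)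
  qed
  finally show ?thesis
    using cTS by simp
qed

lemma binomial_div_eq:
  assumes "0 < k" "k \<le> N"
  shows "real (N choose k) / real N = real ((N - 1) choose (k - 1)) / real k"
proof -
  have "real k * real (N choose k) = real N * real ((N - 1) choose (k - 1))"
    using times_binomial_minus1_eq[OF assms(1), of N] by (metis of_nat_mult)
  with assms show ?thesis
    by (simp add: field_simps)
qed

section \<open>Subsets of a cyclic group with prescribed sum\<close>

lemma Pplus_sum:
  assumes "0 < R"
  shows "(\<Sum>l<R. Pplus R \<mu> l) = R choose \<mu>"
proof -
  let ?X = "{S. S \<subseteq> {..<R} \<and> card S = \<mu>}"
  have "finite ?X"
    by (rule finite_subset[of _ "Pow {..<R}"]) auto
  then have "(\<Sum>l<R. \<Sum>S\<in>{S \<in> ?X. (\<Sum>S) mod R = l}. 1) = (\<Sum>S\<in>?X. 1::nat)"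
    using assms by (intro sum.group) auto
  then have "card ?X = (\<Sum>l<R. card {S \<in> ?X. (\<Sum>S) mod R = l})"
    by simp
  also have "\<dots> = (\<Sum>l<R. Pplus R \<mu> l)"
    unfolding Pplus_def by (intro sum.cong refl arg_cong[where f = card]) auto
  finally show ?thesis
    by (simp add: n_subsets)
qed

text \<open>Adding 1 to every element of a \<open>\<mu>\<close>-subset of \<open>\<int>\<^sub>R\<close> adds \<open>\<mu>\<close> to its sum.\<close>

lemma Pplus_le_Pplus_add:
  assumes R: "0 < R"
  shows "Pplus R \<mu> l \<le> Pplus R \<mu> ((l + \<mu>) mod R)"
proof -
  let ?s = "\<lambda>x. (x + 1) mod R"
  let ?L1 = "{S. S \<subseteq> {..<R} \<and> card S = \<mu> \<and> (\<Sum>S) mod R = l}"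
  let ?L2 = "{S. S \<subseteq> {..<R} \<and> card S = \<mu> \<and> (\<Sum>S) mod R = (l + \<mu>) mod R}"
  have s_inj: "inj_on ?s {..<R}"
  proof (rule inj_onI)
    fix x y assume "x \<in> {..<R}" "y \<in> {..<R}" "(x + 1) mod R = (y + 1) mod R"
    then show "x = y"
      by (cases "x + 1 = R"; cases "y + 1 = R") auto
  qed
  have "inj_on (image ?s) ?L1"
    using inj_on_image_eq_iff[OF s_inj] by (intro inj_onI) blast
  moreover have "image ?s ` ?L1 \<subseteq> ?L2"
  proof
    fix A assume "A \<in> image ?s ` ?L1"
    then obtain S where S: "S \<subseteq> {..<R}" "card S = \<mu>" "(\<Sum>S) mod R = l" and A: "A = ?s ` S"
      by auto
    have inj: "inj_on ?s S"
      using inj_on_subset[OF s_inj S(1)] .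
    have "(\<Sum>A) mod R = (\<Sum>x\<in>S. x + 1) mod R"
      using mod_sum_eq[of "\<lambda>x. x + 1" R S] sum.reindex[OF inj, of id] A by simp
    also have "(\<Sum>x\<in>S. x + 1) = \<Sum>S + card S"
      by (simp only: sum.distrib) simp
    also have "(\<Sum>S + card S) mod R = (l + \<mu>) mod R"
      using S(2,3) mod_add_left_eq[of "\<Sum>S" R \<mu>] by simp
    finally show "A \<in> ?L2"
      using R S A card_image[OF inj] by auto
  qed
  moreover have "finite ?L2"
    by (rule finite_subset[of _ "Pow {..<R}"]) auto
  ultimately show ?thesis
    unfolding Pplus_def by (rule card_inj_on_le)
qed

lemma Pplus_le_Pplus_add_mult:
  assumes R: "0 < R" and l: "l < R"
  shows "Pplus R \<mu> l \<le> Pplus R \<mu> ((l + k * \<mu>) mod R)"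
proof (induction k)
  case (Suc k)
  have "((l + k * \<mu>) mod R + \<mu>) mod R = (l + Suc k * \<mu>) mod R"
    unfolding mod_add_left_eq by (simp add: algebra_simps)
  then show ?case
    using Suc Pplus_le_Pplus_add[OF R, of \<mu> "(l + k * \<mu>) mod R"] by simp
qed (use l in simp)

lemma mod_reach_if_coprime:
  fixes \<mu> R :: nat
  assumes "coprime \<mu> R" "a < R" "b < R"
  shows "\<exists>k. (a + k * \<mu>) mod R = b"
proof -
  obtain x where x: "[\<mu> * x = 1] (mod R)"
    using cong_solve_coprime_nat[OF assms(1)] by auto
  have "[a + (b + R - a) * (\<mu> * x) = a + (b + R - a) * 1] (mod R)"
    by (intro cong_add cong_mult cong_refl x)
  moreover have "(b + R - a) * (\<mu> * x) = ((b + R - a) * x) * \<mu>"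
    by (simp only: ac_simps)
  moreover have "a + (b + R - a) * 1 = b + R"
    using assms by simp
  ultimately have "[a + ((b + R - a) * x) * \<mu> = b] (mod R)"
    by (simp add: cong_def)
  with assms show ?thesis
    by (auto simp: cong_def)
qed

lemma Pplus_eq_if_coprime:
  assumes "coprime R \<mu>" "l < R" "l' < R"
  shows "Pplus R \<mu> l = Pplus R \<mu> l'"
proof -
  have R: "0 < R"
    using assms by simp
  obtain k k' where "(l + k * \<mu>) mod R = l'" "(l' + k' * \<mu>) mod R = l"
    using mod_reach_if_coprime assms by (metis coprime_commute)
  then show ?thesis
    using Pplus_le_Pplus_add_mult[OF R, of l \<mu> k] Pplus_le_Pplus_add_mult[OF R, of l' \<mu> k'] assms
    by simp
qed

lemma Pplus_eq_binomial_div: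
  assumes R: "0 < R" and const: "\<forall>l1<R. \<forall>l2<R. Pplus R \<mu> l1 = Pplus R \<mu> l2" and l: "l < R"
  shows "R * Pplus R \<mu> l = R choose \<mu>"
proof -
  have "(\<Sum>l'<R. Pplus R \<mu> l') = (\<Sum>l'<R. Pplus R \<mu> l)"
  proof (rule sum.cong[OF refl])
    fix l' assume "l' \<in> {..<R}"
    then show "Pplus R \<mu> l' = Pplus R \<mu> l"
      using const l by blast
  qed
  then show ?thesis
    using Pplus_sum[OF R] by simp
qed

section \<open>Subsets of the multiplicative group with prescribed product\<close>

lemma card_subsets_prod_eq_Ptimes:
  fixes f :: "'b \<Rightarrow> 'a::{field,finite}"
  assumes f: "bij_betw f N (UNIV - {0})"
  shows "card {S. S \<subseteq> N \<and> card S = \<mu> \<and> (\<Prod>k\<in>S. f k) = g} = Ptimes \<mu> g"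
proof -
  let ?L = "{S. S \<subseteq> N \<and> card S = \<mu> \<and> (\<Prod>k\<in>S. f k) = g}"
  have inj: "inj_on f N"
    using f by (simp add: bij_betw_def)
  have props: "card (f ` S) = card S" "\<Prod>(f ` S) = (\<Prod>k\<in>S. f k)" if "S \<subseteq> N" for S
    using inj_on_subset[OF inj that] by (simp_all add: card_image prod.reindex)
  have "inj_on (image f) ?L"
    using inj_on_image_eq_iff[OF inj] by (intro inj_onI) blast
  moreover have "image f ` ?L = {A. 0 \<notin> A \<and> card A = \<mu> \<and> \<Prod>A = g}"
  proof (intro set_eqI iffI)
    fix A assume "A \<in> image f ` ?L"
    then obtain S where S: "S \<subseteq> N" "card S = \<mu>" "(\<Prod>k\<in>S. f k) = g" "A = f ` S"
      by auto
    then have "A \<subseteq> UNIV - {0}"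
      using f by (auto simp: bij_betw_def)
    with S props show "A \<in> {A. 0 \<notin> A \<and> card A = \<mu> \<and> \<Prod>A = g}"
      by auto
  next
    fix A assume A: "A \<in> {A. 0 \<notin> A \<and> card A = \<mu> \<and> \<Prod>A = g}"
    let ?S = "{k \<in> N. f k \<in> A}"
    have "f ` ?S = A"
      using A f by (auto simp: bij_betw_def)
    with A props[of ?S] show "A \<in> image f ` ?L"
      by (intro image_eqI[of _ _ ?S]) auto
  qed
  ultimately show ?thesis
    unfolding Ptimes_def by (metis (no_types, lifting) card_image)
qed

lemma power_card_minus_one_eq_1:
  fixes x :: "'a::{field,finite}"
  assumes "x \<noteq> 0"
  shows "x ^ (card (UNIV :: 'a set) - 1) = 1"
proof -
  let ?F = "UNIV - {0 :: 'a}"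
  have "(\<Prod>y\<in>?F. y) = (\<Prod>y\<in>?F. x * y)"
    by (rule prod.reindex_bij_witness[of _ "\<lambda>y. x * y" "\<lambda>y. y / x"]) (use assms in auto)
  also have "\<dots> = x ^ card ?F * (\<Prod>y\<in>?F. y)"
    by (simp add: prod.distrib)
  finally have "x ^ card ?F = 1"
    by simp
  then show ?thesis
    by (simp add: card_Diff_subset)
qed

lemma two_le_card_field: "2 \<le> card (UNIV :: 'a::{field,finite} set)"
  using card_mono[of UNIV "{0, 1 :: 'a}"] by simp

locale primitive_element =
  fixes \<beta> :: "'a::{field,finite}"
  assumes nonzero: "\<beta> \<noteq> 0" and generates: "x \<noteq> 0 \<Longrightarrow> \<exists>k. \<beta> ^ k = x"
begin

lemma power_mod_order: "\<beta> ^ k = \<beta> ^ (k mod (card (UNIV :: 'a set) - 1))"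
proof -
  let ?r = "card (UNIV :: 'a set) - 1"
  have "\<beta> ^ k = \<beta> ^ (?r * (k div ?r) + k mod ?r)"
    by simp
  also have "\<dots> = (\<beta> ^ ?r) ^ (k div ?r) * \<beta> ^ (k mod ?r)"
    by (simp only: power_add power_mult)
  also have "\<dots> = \<beta> ^ (k mod ?r)"
    using power_card_minus_one_eq_1[OF nonzero] by simp
  finally show ?thesis .
qed

lemma bij_betw_power: "bij_betw (\<lambda>k. \<beta> ^ k) {..<card (UNIV :: 'a set) - 1} (UNIV - {0})"
proof -
  let ?r = "card (UNIV :: 'a set) - 1"
  have r: "0 < ?r"
    using two_le_card_field[where 'a = 'a] by linarith
  have img: "(\<lambda>k. \<beta> ^ k) ` {..<?r} = UNIV - {0}"
  proof (intro set_eqI iffI)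
    fix x :: 'a assume "x \<in> UNIV - {0}"
    then obtain k where "\<beta> ^ k = x"
      using generates by auto
    then show "x \<in> (\<lambda>k. \<beta> ^ k) ` {..<?r}"
      using power_mod_order[of k] r by (intro image_eqI[of _ _ "k mod ?r"]) auto
  qed (use nonzero in auto)
  moreover have "card (UNIV - {0 :: 'a}) = card {..<?r}"
    by (simp add: card_Diff_subset)
  ultimately show ?thesis
    by (simp add: bij_betw_def eq_card_imp_inj_on)
qed

lemma power_eq_iff: "\<beta> ^ a = \<beta> ^ b \<longleftrightarrow> a mod (card (UNIV :: 'a set) - 1) = b mod (card (UNIV :: 'a set) - 1)"
proof -
  let ?r = "card (UNIV :: 'a set) - 1"
  have "0 < ?r"
    using two_le_card_field[where 'a = 'a] by linarith
  then have "a mod ?r \<in> {..<?r}" "b mod ?r \<in> {..<?r}"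
    by auto
  then show ?thesis
    using bij_betw_power power_mod_order unfolding bij_betw_def inj_on_def by metis
qed

lemma Pplus_eq_Ptimes:
  assumes "l < card (UNIV :: 'a set) - 1"
  shows "Pplus (card (UNIV :: 'a set) - 1) \<mu> l = Ptimes \<mu> (\<beta> ^ l)"
proof -
  let ?r = "card (UNIV :: 'a set) - 1"
  have "{S. S \<subseteq> {..<?r} \<and> card S = \<mu> \<and> (\<Sum>S) mod ?r = l}
      = {S. S \<subseteq> {..<?r} \<and> card S = \<mu> \<and> (\<Prod>k\<in>S. \<beta> ^ k) = \<beta> ^ l}"
  proof -
    have "(\<Prod>k\<in>S. \<beta> ^ k) = \<beta> ^ l \<longleftrightarrow> (\<Sum>S) mod ?r = l" for S :: "nat set"
      using power_eq_iff[of "\<Sum>S" l] assms by (simp add: power_sum)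
    then show ?thesis
      by blast
  qed
  then show ?thesis
    unfolding Pplus_def using card_subsets_prod_eq_Ptimes[OF bij_betw_power] by simp
qed

end

lemma primitive_elementI:
  fixes \<beta> :: "'a::{field,finite}"
  assumes "3 \<le> card (UNIV :: 'a set)" "\<forall>x::'a. x \<noteq> 0 \<longrightarrow> (\<exists>k. \<beta> ^ k = x)"
  shows "primitive_element \<beta>"
proof
  have "UNIV \<noteq> {0, 1 :: 'a}"
  proof
    assume "UNIV = {0, 1 :: 'a}"
    then have "card (UNIV :: 'a set) = card {0, 1 :: 'a}"
      by (rule arg_cong)
    then have "card (UNIV :: 'a set) = 2"
      by simp
    with assms(1) show False
      by simp
  qed
  then obtain x :: 'a where x: "x \<noteq> 0" "x \<noteq> 1"
    by blast
  then obtain k where "\<beta> ^ k = x"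
    using assms(2) by blast
  with x show "\<beta> \<noteq> 0"
    by (cases k) auto
qed (use assms(2) in blast)

text \<open>\<open>Omega n d a w\<close> is the contribution of a coset vector of weight \<open>a \<le> d - 2\<close> to
  \<open>B\<^sub>w\<close> of its coset, for \<open>w \<ge> d - 1\<close>.\<close>

definition Omega :: "nat \<Rightarrow> nat \<Rightarrow> nat \<Rightarrow> nat \<Rightarrow> int" where
  "Omega n d a w = neg1pow (int w - int d) * int ((n - a) choose (w - a)) * int ((w - a - 1) choose (d - 2 - a))"

lemma neg1pow_diff: "neg1pow (int a - int b) = (-1) ^ (a + b)"
proof -
  have "even (int a - int b) \<longleftrightarrow> even (a + b)"
    by presburger
  then show ?thesis
    by (simp add: neg1pow_def minus_one_power_iff)
qed

lemma Omega_0_eq_Omega0: "Omega (q + 1) d 0 w = Omega0 q d w"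
  by (simp add: Omega_def Omega0_def)

lemma Omega_2_eq_Omega2: "Omega (q + 1) d 2 w = Omega2 q d w"
  by (simp add: Omega_def Omega2_def)

lemma Omega_d2_eq:
  assumes "d - 1 \<le> w" "w \<le> q + 1" "2 \<le> d"
  shows "Omega (q + 1) d (d - 2) w = neg1pow (int w - int d) * int ((q + 3 - d) choose (q + 1 - w))"
proof -
  have k: "w - (d - 2) \<le> q + 3 - d"
    using assms by simp
  have "(q + 3 - d) - (w - (d - 2)) = q + 1 - w"
    using assms by simp
  then have "(q + 3 - d) choose (w - (d - 2)) = (q + 3 - d) choose (q + 1 - w)"
    using binomial_symmetric[OF k] by simp
  moreover have "q + 1 - (d - 2) = q + 3 - d"
    using assms by simp
  ultimately show ?thesis
    using assms by (simp add: Omega_def)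
qed

section \<open>MDS codes given by a parity-check matrix\<close>

definition parity_code :: "(nat \<Rightarrow> nat \<Rightarrow> 'a::field) \<Rightarrow> nat \<Rightarrow> nat \<Rightarrow> (nat \<Rightarrow> 'a) set" where
  "parity_code H r n = {x \<in> vecs n. \<forall>i<r. (\<Sum>j<n. H i j * x j) = 0}"

locale mds_code =
  fixes H :: "nat \<Rightarrow> nat \<Rightarrow> 'a::{field,finite}" and n d :: nat
  assumes two_le_d: "2 \<le> d"
    and min_weight: "x \<in> parity_code H (d - 1) n \<Longrightarrow> x \<noteq> (\<lambda>_. 0) \<Longrightarrow> d \<le> hw n x"
begin

abbreviation code :: "(nat \<Rightarrow> 'a) set" where
  "code \<equiv> parity_code H (d - 1) n"

lemma code_subset_vecs: "code \<subseteq> vecs n"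
  by (auto simp: parity_code_def)

lemma finite_code: "finite code"
  using finite_subset[OF code_subset_vecs finite_vecs] .

lemma zero_in_code: "(\<lambda>_. 0) \<in> code"
  by (simp add: parity_code_def vecs_def)

lemma code_diff: "x \<in> code \<Longrightarrow> y \<in> code \<Longrightarrow> (\<lambda>j. x j - y j) \<in> code"
  by (simp add: parity_code_def vecs_def right_diff_distrib sum_subtractf)

lemma code_add: "x \<in> code \<Longrightarrow> y \<in> code \<Longrightarrow> (\<lambda>j. x j + y j) \<in> code"
  by (simp add: parity_code_def vecs_def distrib_left sum.distrib)

lemma code_smult: "x \<in> code \<Longrightarrow> (\<lambda>j. a * x j) \<in> code"
proof -
  have "(\<Sum>j<n. H i j * (a * x j)) = a * (\<Sum>j<n. H i j * x j)" for i
    by (simp add: sum_distrib_left ac_simps)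
  then show "x \<in> code \<Longrightarrow> (\<lambda>j. a * x j) \<in> code"
    by (simp add: parity_code_def vecs_def)
qed

lemma codeword_eq_zero:
  assumes "c \<in> code" "supp n c \<subseteq> U" "finite U" "card U < d"
  shows "c = (\<lambda>_. 0)"
  using assms min_weight card_mono[of U "supp n c"] by (force simp: hw_eq_card_supp)

definition syndrome :: "(nat \<Rightarrow> 'a) \<Rightarrow> nat \<Rightarrow> 'a" where
  "syndrome x = (\<lambda>i. if i < d - 1 then \<Sum>j<n. H i j * x j else 0)"

lemma syndrome_in: "syndrome x \<in> supported_on {..<d - 1}"
  by (simp add: syndrome_def supported_on_def)

lemma syndrome_eq_iff:
  assumes "x \<in> vecs n" "y \<in> vecs n"
  shows "syndrome x = syndrome y \<longleftrightarrow> (\<lambda>j. x j - y j) \<in> code"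
  using assms by (auto simp: syndrome_def parity_code_def vecs_def fun_eq_iff
      right_diff_distrib sum_subtractf)

lemma in_coset_iff:
  assumes "v \<in> vecs n"
  shows "x \<in> coset_of code v \<longleftrightarrow> x \<in> vecs n \<and> (\<lambda>j. x j - v j) \<in> code"
proof
  assume "x \<in> coset_of code v"
  then obtain c where c: "c \<in> code" "x = (\<lambda>j. v j + c j)"
    by (auto simp: coset_of_def)
  then have "(\<lambda>j. x j - v j) = c"
    by auto
  with c assms code_subset_vecs show "x \<in> vecs n \<and> (\<lambda>j. x j - v j) \<in> code"
    by (auto simp: vecs_def)
next
  assume "x \<in> vecs n \<and> (\<lambda>j. x j - v j) \<in> code"
  then show "x \<in> coset_of code v"
    unfolding coset_of_def by (intro image_eqI[where x = "\<lambda>j. x j - v j"]) auto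
qed

lemma finite_coset: "finite (coset_of code v)"
  unfolding coset_of_def using finite_code by (rule finite_imageI)

lemma coset_subset_vecs: "v \<in> vecs n \<Longrightarrow> coset_of code v \<subseteq> vecs n"
  using in_coset_iff by blast

lemma self_in_coset: "v \<in> vecs n \<Longrightarrow> v \<in> coset_of code v"
  using in_coset_iff zero_in_code by simp

lemma coset_of_zero: "coset_of code (\<lambda>_. 0) = code"
  using in_coset_iff[of "\<lambda>_. 0"] code_subset_vecs by (auto simp: vecs_def)

lemma coset_of_eq:
  assumes v: "v \<in> vecs n" and y: "y \<in> coset_of code v"
  shows "coset_of code y = coset_of code v"
proof -
  have y': "y \<in> vecs n" "(\<lambda>j. y j - v j) \<in> code"
    using y in_coset_iff[OF v] by auto
  have "(\<lambda>j. x j - v j) \<in> code \<longleftrightarrow> (\<lambda>j. x j - y j) \<in> code" for x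
  proof
    assume "(\<lambda>j. x j - v j) \<in> code"
    from code_diff[OF this y'(2)] show "(\<lambda>j. x j - y j) \<in> code"
      by simp
  next
    assume "(\<lambda>j. x j - y j) \<in> code"
    from code_add[OF this y'(2)] show "(\<lambda>j. x j - v j) \<in> code"
      by simp
  qed
  then show ?thesis
    using in_coset_iff[OF v] in_coset_iff[OF y'(1)] by blast
qed

lemma coset_elem_eqI:
  assumes v: "v \<in> vecs n" and xy: "x \<in> coset_of code v" "y \<in> coset_of code v"
    and small: "card (supp n x \<union> supp n y) < d"
  shows "x = y"
proof -
  have "(\<lambda>j. x j - v j) \<in> code" "(\<lambda>j. y j - v j) \<in> code"
    using xy in_coset_iff[OF v] by auto
  from code_diff[OF this] have "(\<lambda>j. x j - y j) \<in> code"
    by simp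
  then have "(\<lambda>j. x j - y j) = (\<lambda>_. 0)"
    using codeword_eq_zero[OF _ supp_diff_subset] small by simp
  then show ?thesis
    by (simp add: fun_eq_iff)
qed

lemma coset_elem_eq_if_low_weight:
  assumes v: "v \<in> vecs n" and y: "y \<in> coset_of code v" and light: "hw n y + hw n v < d"
  shows "y = v"
proof -
  have "card (supp n y \<union> supp n v) < d"
    using light card_Un_le[of "supp n y" "supp n v"] by (simp add: hw_eq_card_supp)
  then show ?thesis
    using coset_elem_eqI[OF v y self_in_coset[OF v]] by simp
qed

lemma inj_on_supp_coset: "v \<in> vecs n \<Longrightarrow> inj_on (supp n) {y \<in> coset_of code v. hw n y < d}"
proof (rule inj_onI)
  fix y y' assume "v \<in> vecs n" "y \<in> {y \<in> coset_of code v. hw n y < d}"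
    "y' \<in> {y \<in> coset_of code v. hw n y < d}" "supp n y = supp n y'"
  then show "y = y'"
    by (intro coset_elem_eqI[of v]) (auto simp: hw_eq_card_supp)
qed

lemma exists_coset_elem_supported_on:
  assumes v: "v \<in> vecs n" and U: "U \<subseteq> {..<n}" "d - 1 \<le> card U"
  shows "\<exists>x\<in>coset_of code v. supp n x \<subseteq> U"
proof -
  obtain U' where U': "U' \<subseteq> U" "card U' = d - 1" "finite U'"
    using obtain_subset_with_card_n[OF U(2)] by metis
  let ?S = "supported_on U' :: (nat \<Rightarrow> 'a) set"
  have S_vecs: "?S \<subseteq> vecs n"
    using U U' by (meson order_trans supported_on_subset_vecs)
  have "inj_on syndrome ?S"
  proof (rule inj_onI)
    fix x y assume x: "x \<in> ?S" and y: "y \<in> ?S" and "syndrome x = syndrome y"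
    then have "(\<lambda>j. x j - y j) \<in> code"
      using syndrome_eq_iff S_vecs by blast
    moreover have "supp n (\<lambda>j. x j - y j) \<subseteq> U'"
      using x y by (rule supp_diff_subset_supported_on)
    ultimately have "(\<lambda>j. x j - y j) = (\<lambda>_. 0)"
      using codeword_eq_zero U' two_le_d by simp
    then show "x = y"
      by (simp add: fun_eq_iff)
  qed
  then have "card (syndrome ` ?S) = card (supported_on {..<d - 1} :: (nat \<Rightarrow> 'a) set)"
    using U' by (simp add: card_image card_supported_on)
  then have "syndrome ` ?S = supported_on {..<d - 1}"
    using syndrome_in by (intro card_subset_eq finite_supported_on) auto
  then obtain x where x: "x \<in> ?S" "syndrome x = syndrome v"
    using syndrome_in[of v] by (metis imageE)
  then have "x \<in> coset_of code v"
    using in_coset_iff[OF v] syndrome_eq_iff[OF _ v] S_vecs by blast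
  moreover have "supp n x \<subseteq> U"
    using x U' by (auto simp: supp_def supported_on_def)
  ultimately show ?thesis
    by blast
qed

lemma exists_nonzero_codeword_supported_on:
  assumes U: "U \<subseteq> {..<n}" "d \<le> card U"
  shows "\<exists>c\<in>code. c \<noteq> (\<lambda>_. 0) \<and> supp n c \<subseteq> U"
proof -
  let ?S = "supported_on U :: (nat \<Rightarrow> 'a) set"
  have fU: "finite U"
    using U finite_subset by blast
  have "card (supported_on {..<d - 1} :: (nat \<Rightarrow> 'a) set) < card ?S"
    using U two_le_d two_le_card_field[where 'a = 'a] fU
    by (simp add: card_supported_on power_strict_increasing)
  moreover have "syndrome ` ?S \<subseteq> supported_on {..<d - 1}"
    using syndrome_in by auto
  ultimately have "\<not> inj_on syndrome ?S"
    using card_mono[OF finite_supported_on] card_image by (metis finite_lessThan not_le)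
  then obtain x y where xy: "x \<in> ?S" "y \<in> ?S" "syndrome x = syndrome y" "x \<noteq> y"
    by (auto simp: inj_on_def)
  have "?S \<subseteq> vecs n"
    using U(1) by (rule supported_on_subset_vecs)
  with xy have "(\<lambda>j. x j - y j) \<in> code"
    using syndrome_eq_iff by blast
  moreover have "(\<lambda>j. x j - y j) \<noteq> (\<lambda>_. 0)"
    using xy by (auto simp: fun_eq_iff)
  moreover have "supp n (\<lambda>j. x j - y j) \<subseteq> U"
    using xy(1,2) by (rule supp_diff_subset_supported_on)
  ultimately show ?thesis
    by blast
qed

definition count_within :: "(nat \<Rightarrow> 'a) set \<Rightarrow> nat set \<Rightarrow> nat" where
  "count_within X U = card {x \<in> X. supp n x \<subseteq> U}"

definition count_exact :: "(nat \<Rightarrow> 'a) set \<Rightarrow> nat set \<Rightarrow> nat" where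
  "count_exact X T = card {x \<in> X. supp n x = T}"

lemma finite_subsets_of_card: "finite {T. T \<subseteq> {..<n} \<and> card T = w}"
  by (rule finite_subset[of _ "Pow {..<n}"]) auto

lemma B_eq_sum_count_exact:
  assumes "finite X"
  shows "B n w X = (\<Sum>T | T \<subseteq> {..<n} \<and> card T = w. count_exact X T)"
proof -
  have "(\<Sum>T | T \<subseteq> {..<n} \<and> card T = w. \<Sum>x\<in>{x \<in> {x\<in>X. hw n x = w}. supp n x = T}. 1)
      = (\<Sum>x\<in>{x\<in>X. hw n x = w}. 1::nat)"
    using assms finite_subsets_of_card by (intro sum.group) (auto simp: hw_eq_card_supp dest: mem_supp_less)
  moreover have "{x \<in> {x\<in>X. hw n x = w}. supp n x = T} = {x \<in> X. supp n x = T}"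
    if "card T = w" for T
    using that by (auto simp: hw_eq_card_supp)
  ultimately show ?thesis
    by (simp add: B_def count_exact_def)
qed

lemma count_within_eq_sum:
  assumes "finite X" "finite U"
  shows "count_within X U = (\<Sum>T\<in>Pow U. count_exact X T)"
proof -
  have "(\<Sum>T\<in>Pow U. \<Sum>x\<in>{x \<in> {x\<in>X. supp n x \<subseteq> U}. supp n x = T}. 1) = (\<Sum>x\<in>{x\<in>X. supp n x \<subseteq> U}. 1::nat)"
    using assms by (intro sum.group) auto
  moreover have "{x \<in> {x\<in>X. supp n x \<subseteq> U}. supp n x = T} = {x \<in> X. supp n x = T}" if "T \<subseteq> U" for T
    using that by auto
  ultimately show ?thesis
    by (simp add: count_within_def count_exact_def)
qed

lemma count_exact_mobius:
  assumes "finite X" "finite T"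
  shows "int (count_exact X T) = (\<Sum>U\<in>Pow T. (-1) ^ (card T - card U) * int (count_within X U))"
  using assms by (intro inclusion_exclusion_mobius) (simp add: count_within_eq_sum)

lemma count_within_coset:
  assumes v: "v \<in> vecs n" and U: "U \<subseteq> {..<n}" "d - 1 \<le> card U"
  shows "count_within (coset_of code v) U = count_within code U"
proof -
  obtain x0 where x0: "x0 \<in> coset_of code v" "supp n x0 \<subseteq> U"
    using exists_coset_elem_supported_on[OF assms] by blast
  have x0v: "x0 \<in> vecs n"
    using x0 coset_subset_vecs[OF v] by blast
  have V: "coset_of code v = coset_of code x0"
    using coset_of_eq[OF v x0(1)] by simp
  have "bij_betw (\<lambda>c j. x0 j + c j) {c \<in> code. supp n c \<subseteq> U} {x \<in> coset_of code x0. supp n x \<subseteq> U}"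
  proof (rule bij_betwI[where g = "\<lambda>x j. x j - x0 j"])
    show "(\<lambda>c j. x0 j + c j) \<in> {c \<in> code. supp n c \<subseteq> U} \<rightarrow> {x \<in> coset_of code x0. supp n x \<subseteq> U}"
      using x0(2) supp_add_subset[of n x0] by (auto simp: coset_of_def)
    show "(\<lambda>x j. x j - x0 j) \<in> {x \<in> coset_of code x0. supp n x \<subseteq> U} \<rightarrow> {c \<in> code. supp n c \<subseteq> U}"
      using x0(2) in_coset_iff[OF x0v] supp_diff_subset by blast
  qed auto
  then show ?thesis
    unfolding count_within_def V by (simp add: bij_betw_same_card)
qed

lemma B_eq_alternating_count_within:
  assumes "finite X"
  shows "int (B n w X)
    = (\<Sum>T | T \<subseteq> {..<n} \<and> card T = w. \<Sum>U\<in>Pow T. (-1) ^ (w - card U) * int (count_within X U))"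
  using assms by (simp add: B_eq_sum_count_exact count_exact_mobius finite_subset[of _ "{..<n}"])

lemma count_within_low:
  assumes "finite X" "finite U" "card U \<le> d - 2"
  shows "int (count_within X U) = (\<Sum>y | y \<in> X \<and> hw n y \<le> d - 2. if supp n y \<subseteq> U then 1 else 0)"
proof -
  have "{x \<in> X. supp n x \<subseteq> U} = {y \<in> {y. y \<in> X \<and> hw n y \<le> d - 2}. supp n y \<subseteq> U}"
    using assms card_mono[of U] by (auto simp: hw_eq_card_supp) (meson order_trans)
  then show ?thesis
    using assms(1) by (simp add: count_within_def sum.inter_filter[symmetric])
qed

definition signed_superset_count :: "nat set \<Rightarrow> nat \<Rightarrow> int" where
  "signed_superset_count S w = (\<Sum>T | T \<subseteq> {..<n} \<and> card T = w.
     \<Sum>U\<in>Pow T. if card U \<le> d - 2 \<and> S \<subseteq> U then (-1) ^ (w - card U) else 0)"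

text \<open>Splitting the inclusion-exclusion formula for \<open>B\<^sub>w(X)\<close> at \<open>|U| = d - 1\<close>: the small sets
  \<open>U\<close> only see the vectors of weight at most \<open>d - 2\<close>.\<close>

lemma B_split:
  assumes X: "finite X"
  shows "int (B n w X) = (\<Sum>T | T \<subseteq> {..<n} \<and> card T = w. \<Sum>U\<in>Pow T.
        if d - 1 \<le> card U then (-1) ^ (w - card U) * int (count_within X U) else 0)
      + (\<Sum>y | y \<in> X \<and> hw n y \<le> d - 2. signed_superset_count (supp n y) w)"
proof -
  let ?Tw = "{T. T \<subseteq> {..<n} \<and> card T = w}"
  let ?Y = "{y. y \<in> X \<and> hw n y \<le> d - 2}"
  have "int (B n w X) = (\<Sum>T\<in>?Tw. \<Sum>U\<in>Pow T. (-1) ^ (w - card U) * int (count_within X U))"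
    by (rule B_eq_alternating_count_within[OF X])
  also have "\<dots> = (\<Sum>T\<in>?Tw. \<Sum>U\<in>Pow T.
        (if d - 1 \<le> card U then (-1) ^ (w - card U) * int (count_within X U) else 0)
      + (\<Sum>y\<in>?Y. if card U \<le> d - 2 \<and> supp n y \<subseteq> U then (-1) ^ (w - card U) else 0))"
  proof (intro sum.cong refl)
    fix T U assume "T \<in> ?Tw" "U \<in> Pow T"
    then have U: "finite U"
      by (auto intro: finite_subset)
    show "(-1) ^ (w - card U) * int (count_within X U)
      = (if d - 1 \<le> card U then (-1) ^ (w - card U) * int (count_within X U) else 0)
      + (\<Sum>y\<in>?Y. if card U \<le> d - 2 \<and> supp n y \<subseteq> U then (-1) ^ (w - card U) else 0)"
    proof (cases "card U \<le> d - 2")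
      case True
      then show ?thesis
        using count_within_low[OF X U True] two_le_d by (simp add: sum_distrib_left if_distrib cong: if_cong)
    qed simp
  qed
  also have "\<dots> = (\<Sum>T\<in>?Tw. \<Sum>U\<in>Pow T.
        if d - 1 \<le> card U then (-1) ^ (w - card U) * int (count_within X U) else 0)
      + (\<Sum>y\<in>?Y. signed_superset_count (supp n y) w)"
    unfolding signed_superset_count_def by (simp add: sum.distrib sum.swap[of _ ?Y])
  finally show ?thesis .
qed

lemma signed_superset_count_eq_Omega:
  assumes S: "S \<subseteq> {..<n}" "card S \<le> d - 2" and w: "d - 1 \<le> w"
  shows "signed_superset_count S w = Omega n d (card S) w"
proof -
  let ?a = "card S"
  let ?c = "(-1) ^ (w + d) * int ((w - ?a - 1) choose (d - 2 - ?a)) :: int"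
  have inner: "(\<Sum>U\<in>Pow T. if card U \<le> d - 2 \<and> S \<subseteq> U then (-1::int) ^ (w - card U) else 0)
      = (if S \<subseteq> T then ?c else 0)" if T: "T \<subseteq> {..<n}" "card T = w" for T
  proof (cases "S \<subseteq> T")
    case True
    have "(-1::int) ^ (w + (d - 2)) = (-1) ^ (w + d)"
      using two_le_d by (simp add: minus_one_power_iff)
    moreover have "d - 2 < w"
      using w two_le_d by linarith
    ultimately show ?thesis
      using sum_supersets_alternating_truncated[OF finite_subset[OF T(1)] True S(2), unfolded T(2)] True
      by simp
  next
    case False
    then have "\<not> S \<subseteq> U" if "U \<in> Pow T" for U
      using that by auto
    with False show ?thesis
      by simp
  qed
  have "signed_superset_count S w = (\<Sum>T | T \<subseteq> {..<n} \<and> card T = w. if S \<subseteq> T then ?c else 0)"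
    unfolding signed_superset_count_def using inner by (intro sum.cong refl) auto
  also have "\<dots> = (\<Sum>T\<in>{T \<in> {T. T \<subseteq> {..<n} \<and> card T = w}. S \<subseteq> T}. ?c)"
    using finite_subsets_of_card[of w] by (simp only: sum.inter_filter)
  also have "{T \<in> {T. T \<subseteq> {..<n} \<and> card T = w}. S \<subseteq> T} = {T. T \<subseteq> {..<n} \<and> card T = w \<and> S \<subseteq> T}"
    by auto
  also have "(\<Sum>T | T \<subseteq> {..<n} \<and> card T = w \<and> S \<subseteq> T. ?c)
      = int (card {T. T \<subseteq> {..<n} \<and> card T = w \<and> S \<subseteq> T}) * ?c"
    by (rule sum_constant)
  also have "card {T. T \<subseteq> {..<n} \<and> card T = w \<and> S \<subseteq> T} = (n - ?a) choose (w - ?a)"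
    using card_supersets[of "{..<n}" S w] S w by simp
  finally show ?thesis
    unfolding Omega_def neg1pow_diff by (simp only: mult_ac)
qed

lemma B_coset_low_weight:
  assumes v: "v \<in> vecs n" and a: "a + hw n v < d"
  shows "B n a (coset_of code v) = (if a = hw n v then 1 else 0)"
proof -
  have "{x \<in> coset_of code v. hw n x = a} = (if a = hw n v then {v} else {})"
    using coset_elem_eq_if_low_weight[OF v] a self_in_coset[OF v] by auto
  then show ?thesis
    by (simp add: B_def)
qed

lemma sum_low_weight_signed_superset_count:
  assumes X: "finite X" and w: "d - 1 \<le> w"
  shows "(\<Sum>y | y \<in> X \<and> hw n y \<le> d - 2. signed_superset_count (supp n y) w)
    = (\<Sum>a\<le>d - 2. int (B n a X) * Omega n d a w)"
proof -
  have "(\<Sum>y | y \<in> X \<and> hw n y \<le> d - 2. signed_superset_count (supp n y) w)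
      = (\<Sum>y | y \<in> X \<and> hw n y \<le> d - 2. Omega n d (hw n y) w)"
    using w by (intro sum.cong refl) (simp add: signed_superset_count_eq_Omega supp_subset hw_eq_card_supp)
  also have "\<dots> = (\<Sum>a\<le>d - 2. \<Sum>y\<in>{y \<in> {y. y \<in> X \<and> hw n y \<le> d - 2}. hw n y = a}. Omega n d (hw n y) w)"
    using X by (intro sum.group[symmetric]) auto
  also have "\<dots> = (\<Sum>a\<le>d - 2. int (B n a X) * Omega n d a w)"
  proof (intro sum.cong refl)
    fix a assume "a \<in> {..d - 2}"
    then have "{y \<in> {y. y \<in> X \<and> hw n y \<le> d - 2}. hw n y = a} = {x \<in> X. hw n x = a}"
      by auto
    then show "(\<Sum>y\<in>{y \<in> {y. y \<in> X \<and> hw n y \<le> d - 2}. hw n y = a}. Omega n d (hw n y) w)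
        = int (B n a X) * Omega n d a w"
      by (simp add: B_def)
  qed
  finally show ?thesis .
qed

lemma B_code_low_weight: "a < d \<Longrightarrow> B n a code = (if a = 0 then 1 else 0)"
  using B_coset_low_weight[of "\<lambda>_. 0" a] unfolding coset_of_zero by (simp add: vecs_def hw_def)

lemma B_coset_formula:
  assumes v: "v \<in> vecs n" and w: "d - 1 \<le> w"
  shows "int (B n w (coset_of code v)) = int (B n w code)
    + (\<Sum>a\<le>d - 2. int (B n a (coset_of code v)) * Omega n d a w) - Omega n d 0 w"
proof -
  let ?V = "coset_of code v"
  let ?H = "\<Sum>T | T \<subseteq> {..<n} \<and> card T = w. \<Sum>U\<in>Pow T.
        if d - 1 \<le> card U then (-1) ^ (w - card U) * int (count_within code U) else 0"
  have high: "(\<Sum>T | T \<subseteq> {..<n} \<and> card T = w. \<Sum>U\<in>Pow T.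
        if d - 1 \<le> card U then (-1) ^ (w - card U) * int (count_within ?V U) else 0) = ?H"
  proof (intro sum.cong refl)
    fix T U assume "T \<in> {T. T \<subseteq> {..<n} \<and> card T = w}" "U \<in> Pow T"
    then show "(if d - 1 \<le> card U then (-1) ^ (w - card U) * int (count_within ?V U) else 0)
        = (if d - 1 \<le> card U then (-1) ^ (w - card U) * int (count_within code U) else (0::int))"
      using count_within_coset[OF v, of U] by auto
  qed
  have "(\<Sum>a\<le>d - 2. int (B n a code) * Omega n d a w) = (\<Sum>a\<le>d - 2. if a = 0 then Omega n d 0 w else 0)"
    using B_code_low_weight two_le_d by (intro sum.cong refl) auto
  then have "int (B n w code) = ?H + Omega n d 0 w"
    using B_split[OF finite_code, of w] unfolding sum_low_weight_signed_superset_count[OF finite_code w] by simp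
  moreover have "int (B n w ?V) = ?H + (\<Sum>a\<le>d - 2. int (B n a ?V) * Omega n d a w)"
    using B_split[OF finite_coset, of w v] unfolding high sum_low_weight_signed_superset_count[OF finite_coset w] .
  ultimately show ?thesis
    by simp
qed

lemma same_wd_if_low_B_eq:
  assumes v: "v \<in> vecs n" "v' \<in> vecs n"
    and light: "\<forall>a\<le>d - 2. B n a (coset_of code v) = B n a (coset_of code v')"
  shows "same_wd n (coset_of code v) (coset_of code v')"
  unfolding same_wd_def
proof
  fix w
  show "B n w (coset_of code v) = B n w (coset_of code v')"
  proof (cases "w \<le> d - 2")
    case False
    then have "int (B n w (coset_of code v)) = int (B n w (coset_of code v'))"
      using B_coset_formula[OF v(1)] B_coset_formula[OF v(2)] light by simp
    then show ?thesis
      by simp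
  qed (use light in simp)
qed

lemma coset_weight_le: "x \<in> coset_of code v \<Longrightarrow> coset_weight n (coset_of code v) \<le> hw n x"
  unfolding coset_weight_def by (rule Min_le) (use finite_coset in auto)

lemma coset_weight_attained:
  assumes "is_coset n code U"
  obtains y where "y \<in> vecs n" "hw n y = coset_weight n U" "U = coset_of code y"
proof -
  obtain v where v: "v \<in> vecs n" "U = coset_of code v"
    using assms by (auto simp: is_coset_def)
  have "coset_weight n U \<in> hw n ` U"
    unfolding coset_weight_def using v finite_coset self_in_coset by (intro Min_in) auto
  then obtain y where y: "y \<in> U" "hw n y = coset_weight n U"
    by auto
  then have "y \<in> vecs n" "U = coset_of code y"
    using v coset_subset_vecs[OF v(1)] coset_of_eq[OF v(1)] by auto
  with y that show thesis
    by blast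
qed

lemma coset_weight_eq_hw:
  assumes v: "v \<in> vecs n" and light: "2 * hw n v < d"
  shows "coset_weight n (coset_of code v) = hw n v"
proof -
  have "is_coset n code (coset_of code v)"
    using v by (auto simp: is_coset_def)
  then obtain y where y: "y \<in> vecs n" "hw n y = coset_weight n (coset_of code v)"
    "coset_of code v = coset_of code y"
    by (rule coset_weight_attained)
  have "y \<in> coset_of code v"
    using y self_in_coset by simp
  moreover have "hw n y \<le> hw n v"
    using y coset_weight_le self_in_coset[OF v] by simp
  ultimately have "y = v"
    using coset_elem_eq_if_low_weight[OF v] light by simp
  with y show ?thesis
    by simp
qed

lemma all_cosets_same_wd_0: "all_cosets_same_wd n code 0"
proof -
  have weight0: "U = code" if U: "is_coset n code U" "coset_weight n U = 0" for U
  proof -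
    obtain y where y: "y \<in> vecs n" "hw n y = coset_weight n U" "U = coset_of code y"
      using coset_weight_attained[OF U(1)] by blast
    then have "supp n y = {}"
      using U(2) by (simp add: hw_eq_card_supp)
    then have "y = (\<lambda>_. 0)"
      using supp_eq_empty_iff[OF y(1)] by simp
    then show ?thesis
      using y(3) coset_of_zero by simp
  qed
  then show ?thesis
    unfolding all_cosets_same_wd_def same_wd_def by metis
qed

lemma all_cosets_same_wd_1:
  assumes d: "3 \<le> d"
  shows "all_cosets_same_wd n code 1"
  unfolding all_cosets_same_wd_def
proof (intro allI impI)
  fix U U' assume "is_coset n code U \<and> is_coset n code U' \<and> coset_weight n U = 1 \<and> coset_weight n U' = 1"
  then obtain y y' where y: "y \<in> vecs n" "hw n y = 1" "U = coset_of code y"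
      and y': "y' \<in> vecs n" "hw n y' = 1" "U' = coset_of code y'"
    using coset_weight_attained by (metis (no_types))
  have "B n a U = B n a U'" if "a \<le> d - 2" for a
  proof -
    have "a + 1 < d"
      using that d by simp
    then show ?thesis
      using B_coset_low_weight[OF y(1), of a] B_coset_low_weight[OF y'(1), of a] y y' by simp
  qed
  then show "same_wd n U U'"
    using same_wd_if_low_B_eq[OF y(1) y'(1)] y(3) y'(3) by simp
qed

lemma two_regular_iff:
  assumes "3 \<le> d"
  shows "two_regular n code \<longleftrightarrow> all_cosets_same_wd n code 2"
  using all_cosets_same_wd_0 all_cosets_same_wd_1[OF assms] by (simp add: two_regular_def)

lemma B_weight2_coset_formula:
  assumes v: "v \<in> vecs n" "hw n v = 2" and d: "5 \<le> d" and w: "d - 1 \<le> w"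
  shows "int (B n w (coset_of code v)) = int (B n w code) - Omega n d 0 w + Omega n d 2 w
    + int (B n (d - 2) (coset_of code v)) * Omega n d (d - 2) w"
proof -
  let ?V = "coset_of code v"
  have "(\<Sum>a\<le>d - 2. int (B n a ?V) * Omega n d a w)
      = (\<Sum>a\<le>d - 3. int (B n a ?V) * Omega n d a w) + int (B n (d - 2) ?V) * Omega n d (d - 2) w"
  proof -
    have "d - 2 = Suc (d - 3)"
      using d by simp
    then show ?thesis
      by (simp only: sum.atMost_Suc)
  qed
  also have "(\<Sum>a\<le>d - 3. int (B n a ?V) * Omega n d a w) = (\<Sum>a\<le>d - 3. if a = 2 then Omega n d 2 w else 0)"
    using B_coset_low_weight[OF v(1)] v(2) d by (intro sum.cong refl) auto
  also have "\<dots> = Omega n d 2 w"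
    using d by simp
  finally show ?thesis
    using B_coset_formula[OF v(1) w] by simp
qed

lemma weight2_cosets_same_wd_iff:
  assumes v: "v \<in> vecs n" "hw n v = 2" and v': "v' \<in> vecs n" "hw n v' = 2" and d: "3 \<le> d"
  shows "same_wd n (coset_of code v) (coset_of code v')
    \<longleftrightarrow> B n (d - 2) (coset_of code v) = B n (d - 2) (coset_of code v')"
proof
  assume top: "B n (d - 2) (coset_of code v) = B n (d - 2) (coset_of code v')"
  have "B n a (coset_of code v) = B n a (coset_of code v')" if "a \<le> d - 2" for a
  proof (cases "a = d - 2")
    case False
    then have "a \<le> d - 3"
      using that by simp
    then show ?thesis
      using B_coset_low_weight[OF v(1), of a] B_coset_low_weight[OF v'(1), of a] v(2) v'(2) d by simp
  qed (use top in simp)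
  then show "same_wd n (coset_of code v) (coset_of code v')"
    using v(1) v'(1) by (intro same_wd_if_low_B_eq) auto
qed (simp add: same_wd_def)

lemma weight_d2_elem_disjoint:
  assumes v: "v \<in> vecs n" "hw n v = 2" and d: "5 \<le> d"
    and y: "y \<in> coset_of code v" "hw n y = d - 2"
  shows "supp n y \<inter> supp n v = {}"
proof (rule ccontr)
  assume "supp n y \<inter> supp n v \<noteq> {}"
  then have "1 \<le> card (supp n y \<inter> supp n v)"
    by (simp add: Suc_le_eq card_gt_0_iff)
  then have "card (supp n y \<union> supp n v) < d"
    using card_Un_Int[of "supp n y" "supp n v"] v y d by (simp add: hw_eq_card_supp)
  then have "y = v"
    using coset_elem_eqI[OF v(1) y(1) self_in_coset[OF v(1)]] by simp
  with v y d show False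
    by simp
qed

lemma weight2_coset_repr:
  assumes "is_coset n code U" "coset_weight n U = 2"
  obtains j1 j2 \<gamma>1 \<gamma>2 where "j1 < n" "j2 < n" "j1 \<noteq> j2" "\<gamma>1 \<noteq> 0" "\<gamma>2 \<noteq> 0"
    "U = coset_of code (v2 j1 j2 \<gamma>1 \<gamma>2)"
proof -
  obtain y where y: "y \<in> vecs n" "hw n y = 2" "U = coset_of code y"
    using coset_weight_attained[OF assms(1)] assms(2) by metis
  obtain j1 j2 where "j1 < n" "j2 < n" "j1 \<noteq> j2" "y j1 \<noteq> 0" "y j2 \<noteq> 0" "y = v2 j1 j2 (y j1) (y j2)"
    using y(1,2) by (rule hw_eq_2_imp_v2)
  with y(3) that show thesis
    by metis
qed

lemma card_vecs_with_hw:
  "card ({y \<in> vecs n. hw n y = w} :: (nat \<Rightarrow> 'a) set) = (n choose w) * (card (UNIV :: 'a set) - 1) ^ w"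
proof -
  have "card ({y \<in> vecs n. hw n y = w} :: (nat \<Rightarrow> 'a) set) = B n w (vecs n :: (nat \<Rightarrow> 'a) set)"
    by (simp add: B_def)
  also have "\<dots> = (\<Sum>T | T \<subseteq> {..<n} \<and> card T = w. count_exact (vecs n) T)"
    by (rule B_eq_sum_count_exact[OF finite_vecs])
  also have "\<dots> = (\<Sum>T | T \<subseteq> {..<n} \<and> card T = w. (card (UNIV :: 'a set) - 1) ^ w)"
    by (intro sum.cong refl) (simp add: count_exact_def card_vecs_with_supp)
  also have "\<dots> = (n choose w) * (card (UNIV :: 'a set) - 1) ^ w"
    using n_subsets[of "{..<n}" w] by simp
  finally show ?thesis .
qed

lemma card_weight2_cosets:
  assumes d: "5 \<le> d"
  shows "card {U. is_coset n code U \<and> coset_weight n U = 2} = (n choose 2) * (card (UNIV :: 'a set) - 1) ^ 2"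
proof -
  let ?W = "{y \<in> vecs n. hw n y = 2} :: (nat \<Rightarrow> 'a) set"
  have "inj_on (coset_of code) ?W"
  proof (rule inj_onI)
    fix y y' assume y: "y \<in> ?W" and y': "y' \<in> ?W" and eq: "coset_of code y = coset_of code y'"
    then have "y' \<in> coset_of code y"
      using self_in_coset by simp
    then show "y = y'"
      using coset_elem_eq_if_low_weight[of y y'] y y' d by simp
  qed
  moreover have "coset_of code ` ?W = {U. is_coset n code U \<and> coset_weight n U = 2}"
  proof (intro set_eqI iffI)
    fix U assume "U \<in> coset_of code ` ?W"
    then show "U \<in> {U. is_coset n code U \<and> coset_weight n U = 2}"
      using coset_weight_eq_hw d by (auto simp: is_coset_def)
  next
    fix U assume "U \<in> {U. is_coset n code U \<and> coset_weight n U = 2}"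
    then show "U \<in> coset_of code ` ?W"
      using coset_weight_attained by (metis (mono_tags, lifting) image_eqI mem_Collect_eq)
  qed
  ultimately show ?thesis
    using card_vecs_with_hw[of 2] card_image by fastforce
qed

end

section \<open>Generalized doubly-extended Reed-Solomon codes\<close>

definition gdrs_matrix :: "(nat \<Rightarrow> 'a::field) \<Rightarrow> nat \<Rightarrow> nat \<Rightarrow> nat \<Rightarrow> nat \<Rightarrow> 'a" where
  "gdrs_matrix m q d i j = (if j < q then m j ^ i else if i = d - 2 then 1 else 0)"

lemma gdrs_code_eq_parity_code: "gdrs_code m q d = parity_code (gdrs_matrix m q d) (d - 1) (q + 1)"
proof -
  have "(\<Sum>j<q + 1. gdrs_matrix m q d i j * x j) = (\<Sum>j<q. m j ^ i * x j) + (if i = d - 2 then x q else 0)"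
    for i and x :: "nat \<Rightarrow> 'a"
    by (simp add: gdrs_matrix_def)
  then show ?thesis
    by (simp add: gdrs_code_def parity_code_def)
qed

definition det2 :: "'a \<times> 'a \<Rightarrow> 'a \<times> 'a \<Rightarrow> 'a::comm_ring" where
  "det2 u v = fst u * snd v - snd u * fst v"

lemma det2_plucker: "det2 a b * det2 c e - det2 a e * det2 c b = det2 a c * det2 b e"
  by (simp add: det2_def algebra_simps)

definition vanishing_poly :: "('b \<Rightarrow> 'a::field) \<Rightarrow> 'b set \<Rightarrow> 'a poly" where
  "vanishing_poly m A = (\<Prod>k\<in>A. [:- m k, 1:])"

lemma poly_vanishing_poly: "poly (vanishing_poly m A) x = (\<Prod>k\<in>A. x - m k)"
  by (simp add: vanishing_poly_def poly_prod)

lemma degree_vanishing_poly: "finite A \<Longrightarrow> degree (vanishing_poly m A) = card A"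
  unfolding vanishing_poly_def by (subst degree_prod_sum_eq) auto

lemma lead_coeff_vanishing_poly: "lead_coeff (vanishing_poly m A) = 1"
  by (simp add: vanishing_poly_def lead_coeff_prod)

locale gdrs =
  fixes m :: "nat \<Rightarrow> 'a::{field,finite}" and q d :: nat
  assumes card_field: "card (UNIV :: 'a set) = q" and enum: "bij_betw m {..<q} UNIV"
    and d_lower: "2 \<le> d" and d_upper: "d \<le> q + 1"
begin

lemma m_inj: "j < q \<Longrightarrow> k < q \<Longrightarrow> m j = m k \<Longrightarrow> j = k"
  using enum by (auto simp: bij_betw_def inj_on_def)

text \<open>Position \<open>j < q\<close> is the point \<open>(m j : 1)\<close> of the projective line and position \<open>q\<close> is
  \<open>(1 : 0)\<close>; \<open>bracket\<close> is the determinant of two such points, and \<open>heval p\<close> evaluates \<open>p\<close>,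
  homogenized to degree \<open>d - 2\<close>, at them.\<close>

definition point :: "nat \<Rightarrow> 'a \<times> 'a" where
  "point j = (if j < q then (m j, 1) else (1, 0))"

definition bracket :: "nat \<Rightarrow> nat \<Rightarrow> 'a" where
  "bracket j k = det2 (point j) (point k)"

lemma bracket_finite: "j < q \<Longrightarrow> k < q \<Longrightarrow> bracket j k = m j - m k"
  and bracket_infinity_left: "k < q \<Longrightarrow> bracket q k = 1"
  and bracket_infinity_right: "j < q \<Longrightarrow> bracket j q = -1"
  by (simp_all add: bracket_def point_def det2_def)

lemma bracket_eq_0_iff: "j < q + 1 \<Longrightarrow> k < q + 1 \<Longrightarrow> bracket j k = 0 \<longleftrightarrow> j = k"
  by (auto simp: bracket_def point_def det2_def m_inj)

definition heval :: "'a poly \<Rightarrow> nat \<Rightarrow> 'a" where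
  "heval p j = (if j < q then poly p (m j) else coeff p (d - 2))"

lemma heval_orthogonal:
  assumes c: "c \<in> gdrs_code m q d" and p: "degree p \<le> d - 2"
  shows "(\<Sum>j<q + 1. heval p j * c j) = 0"
proof -
  have rows: "(\<Sum>j<q + 1. gdrs_matrix m q d i j * c j) = 0" if "i \<le> d - 2" for i
    using c that d_lower by (auto simp: gdrs_code_eq_parity_code parity_code_def)
  have cols: "(\<Sum>i\<le>d - 2. coeff p i * gdrs_matrix m q d i j) = heval p j" for j
  proof (cases "j < q")
    case True
    have "poly p (m j) = (\<Sum>i\<le>d - 2. coeff p i * m j ^ i)"
      unfolding poly_altdef using p by (intro sum.mono_neutral_left) (auto simp: coeff_eq_0)
    with True show ?thesis
      by (simp add: gdrs_matrix_def heval_def)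
  next
    case False
    have "(\<Sum>i\<le>d - 2. coeff p i * gdrs_matrix m q d i j) = (\<Sum>i\<le>d - 2. if i = d - 2 then coeff p i else 0)"
      using False by (intro sum.cong) (auto simp: gdrs_matrix_def)
    with False show ?thesis
      by (simp add: heval_def)
  qed
  have "(\<Sum>j<q + 1. heval p j * c j) = (\<Sum>j<q + 1. \<Sum>i\<le>d - 2. coeff p i * gdrs_matrix m q d i j * c j)"
    by (simp add: cols[symmetric] sum_distrib_right)
  also have "\<dots> = (\<Sum>i\<le>d - 2. coeff p i * (\<Sum>j<q + 1. gdrs_matrix m q d i j * c j))"
    by (subst sum.swap) (simp only: sum_distrib_left mult.assoc)
  also have "\<dots> = 0"
    using rows by simp
  finally show ?thesis .
qed

lemma heval_vanishing_poly_eq_0: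
  assumes S: "S \<subseteq> {..<q + 1}" "card S = d - 2" and j: "j \<in> S"
  shows "heval (vanishing_poly m (S - {q})) j = 0"
proof (cases "j < q")
  case True
  then show ?thesis
    using S j by (auto simp: heval_def poly_vanishing_poly prod_zero_iff finite_subset)
next
  case False
  then have "j = q"
    using S j by auto
  then have "card (S - {q}) < card S"
    using S j by (intro card_Diff1_less) (auto simp: finite_subset)
  then have "degree (vanishing_poly m (S - {q})) < d - 2"
    using S by (simp add: degree_vanishing_poly finite_subset)
  with False show ?thesis
    by (simp add: heval_def coeff_eq_0)
qed

lemma prod_bracket_eq_heval:
  assumes S: "S \<subseteq> {..<q + 1}" "card S = d - 2" and j: "j < q + 1" "j \<notin> S"
  shows "(\<Prod>k\<in>S. bracket j k) = (if q \<in> S then -1 else 1) * heval (vanishing_poly m (S - {q})) j"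
proof (cases "j < q")
  case True
  have fS: "finite S"
    using S finite_subset by blast
  have "(\<Prod>k\<in>S - {q}. bracket j k) = poly (vanishing_poly m (S - {q})) (m j)"
    unfolding poly_vanishing_poly using True S by (intro prod.cong) (auto simp: bracket_finite)
  moreover have "(\<Prod>k\<in>S. bracket j k) = (\<Prod>k\<in>S - {q}. bracket j k) * (if q \<in> S then -1 else 1)"
    using fS True by (simp add: prod.remove[of S q] bracket_infinity_right)
  ultimately show ?thesis
    using True by (simp add: heval_def)
next
  case False
  then have "j = q"
    using j by simp
  with j have "q \<notin> S"
    by simp
  then have "S - {q} = S" "S \<subseteq> {..<q}"
    using S by (auto simp: lessThan_Suc)
  moreover have "degree (vanishing_poly m S) = d - 2"
    using S by (simp add: degree_vanishing_poly finite_subset)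
  ultimately show ?thesis
    using lead_coeff_vanishing_poly[of m S] \<open>j = q\<close> \<open>q \<notin> S\<close>
    by (auto simp: heval_def bracket_infinity_left intro!: prod.neutral)
qed

lemma codeword_relation:
  assumes c: "c \<in> gdrs_code m q d" and SJ: "S \<union> J \<subseteq> {..<q + 1}" "S \<inter> J = {}"
    and card_S: "card S = d - 2" and supp_c: "supp (q + 1) c \<subseteq> S \<union> J"
  shows "(\<Sum>j\<in>J. (\<Prod>k\<in>S. bracket j k) * c j) = 0"
proof -
  let ?p = "vanishing_poly m (S - {q})"
  have S: "S \<subseteq> {..<q + 1}"
    using SJ by blast
  have "degree ?p \<le> d - 2"
    using S card_S by (simp add: degree_vanishing_poly finite_subset card_Diff_subset_Int)
  then have "(\<Sum>j<q + 1. heval ?p j * c j) = 0"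
    by (rule heval_orthogonal[OF c])
  moreover have "(\<Sum>j<q + 1. heval ?p j * c j) = (\<Sum>j\<in>J. heval ?p j * c j)"
  proof (rule sum.mono_neutral_right)
    show "\<forall>j\<in>{..<q + 1} - J. heval ?p j * c j = 0"
      using supp_c heval_vanishing_poly_eq_0[OF S card_S] by (force simp: supp_def)
  qed (use SJ in auto)
  moreover have "(\<Prod>k\<in>S. bracket j k) = (if q \<in> S then -1 else 1) * heval ?p j" if "j \<in> J" for j
    using prod_bracket_eq_heval[OF S card_S] SJ that by blast
  ultimately show ?thesis
    by (simp add: sum_distrib_left[symmetric] mult.assoc)
qed

lemma gdrs_min_weight:
  assumes c: "c \<in> gdrs_code m q d" and nonzero: "c \<noteq> (\<lambda>_. 0)"
  shows "d \<le> hw (q + 1) c"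
proof (rule ccontr)
  assume "\<not> d \<le> hw (q + 1) c"
  then have light: "card (supp (q + 1) c) \<le> d - 1"
    by (simp add: hw_eq_card_supp)
  have "c \<in> vecs (q + 1)"
    using c by (simp add: gdrs_code_def)
  then obtain j0 where j0: "j0 \<in> supp (q + 1) c"
    using supp_eq_empty_iff nonzero by blast
  let ?S0 = "supp (q + 1) c - {j0}"
  have "card ?S0 \<le> d - 2"
    using light j0 by simp
  moreover have "d - 2 \<le> card ({..<q + 1} - {j0})"
    using j0 d_upper by (simp add: supp_def)
  moreover have "?S0 \<subseteq> {..<q + 1} - {j0}"
    using supp_subset by blast
  ultimately obtain S where S: "?S0 \<subseteq> S" "S \<subseteq> {..<q + 1} - {j0}" "card S = d - 2"
    using exists_subset_between[of ?S0 "d - 2" "{..<q + 1} - {j0}"] by auto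
  have "(\<Sum>j\<in>{j0}. (\<Prod>k\<in>S. bracket j k) * c j) = 0"
    using S j0 mem_supp_less[OF j0] by (intro codeword_relation[OF c]) auto
  moreover have "(\<Prod>k\<in>S. bracket j0 k) \<noteq> 0"
    using S j0 bracket_eq_0_iff by (auto simp: prod_zero_iff supp_def finite_subset)
  ultimately have "c j0 = 0"
    by simp
  with j0 show False
    by (simp add: supp_def)
qed

sublocale mds_code "gdrs_matrix m q d" "q + 1" d
  using d_lower gdrs_min_weight by unfold_locales (auto simp: gdrs_code_eq_parity_code)

lemma code_eq_gdrs_code: "code = gdrs_code m q d"
  by (simp add: gdrs_code_eq_parity_code)

definition ratio :: "nat \<Rightarrow> nat \<Rightarrow> nat \<Rightarrow> 'a" where
  "ratio j1 j2 k = bracket j1 k / bracket j2 k"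

text \<open>The cross ratio \<open>k \<mapsto> [j1, k] / [j2, k]\<close> is injective by the Pluecker relation.\<close>

lemma bij_betw_ratio:
  assumes j: "j1 < q + 1" "j2 < q + 1" "j1 \<noteq> j2"
  shows "bij_betw (ratio j1 j2) ({..<q + 1} - {j1, j2}) (UNIV - {0})"
proof -
  let ?N = "{..<q + 1} - {j1, j2}"
  have nonzero: "bracket j k \<noteq> 0" if "j \<in> {j1, j2}" "k \<in> ?N" for j k
    using that j bracket_eq_0_iff by auto
  have "inj_on (ratio j1 j2) ?N"
  proof (rule inj_onI)
    fix k k' assume k: "k \<in> ?N" "k' \<in> ?N" and eq: "ratio j1 j2 k = ratio j1 j2 k'"
    then have "bracket j1 k * bracket j2 k' - bracket j1 k' * bracket j2 k = 0"
      using nonzero by (simp add: ratio_def frac_eq_eq)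
    then have "bracket j1 j2 * bracket k k' = 0"
      using det2_plucker[of "point j1" "point k" "point j2" "point k'"] by (simp add: bracket_def)
    then show "k = k'"
      using bracket_eq_0_iff j k by auto
  qed
  moreover have "ratio j1 j2 ` ?N \<subseteq> UNIV - {0}"
    using nonzero by (auto simp: ratio_def)
  moreover have "card ?N = card (UNIV - {0 :: 'a})"
    using j card_field by (simp add: card_Diff_subset)
  ultimately show ?thesis
    by (metis bij_betw_def card_image card_subset_eq finite_Diff finite)
qed

context
  fixes j1 j2 :: nat and \<gamma>1 \<gamma>2 :: 'a
  assumes j: "j1 < q + 1" "j2 < q + 1" "j1 \<noteq> j2" and \<gamma>: "\<gamma>1 \<noteq> 0" "\<gamma>2 \<noteq> 0" and d5: "5 \<le> d"
begin

lemma v2_vec_props: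
  "v2 j1 j2 \<gamma>1 \<gamma>2 \<in> vecs (q + 1)" "hw (q + 1) (v2 j1 j2 \<gamma>1 \<gamma>2) = 2"
  "supp (q + 1) (v2 j1 j2 \<gamma>1 \<gamma>2) = {j1, j2}"
  using j \<gamma> by (simp_all add: v2_in_vecs hw_v2 supp_v2)

lemma pair_relation:
  assumes c: "c \<in> code" and S: "S \<subseteq> {..<q + 1} - {j1, j2}" "card S = d - 2"
    and supp_c: "supp (q + 1) c \<subseteq> S \<union> {j1, j2}"
  shows "(\<Prod>k\<in>S. bracket j1 k) * c j1 + (\<Prod>k\<in>S. bracket j2 k) * c j2 = 0"
proof -
  have "(\<Sum>j\<in>{j1, j2}. (\<Prod>k\<in>S. bracket j k) * c j) = 0"
    using S supp_c j by (intro codeword_relation[OF c[unfolded code_eq_gdrs_code]]) auto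
  then show ?thesis
    using j by simp
qed

lemma prod_bracket_nonzero:
  "S \<subseteq> {..<q + 1} - {j1, j2} \<Longrightarrow> j \<in> {j1, j2} \<Longrightarrow> (\<Prod>k\<in>S. bracket j k) \<noteq> 0"
  using j bracket_eq_0_iff by (auto simp: prod_zero_iff finite_subset)

lemma prod_ratio: "(\<Prod>k\<in>S. ratio j1 j2 k) = (\<Prod>k\<in>S. bracket j1 k) / (\<Prod>k\<in>S. bracket j2 k)"
  by (simp add: ratio_def prod_dividef)

lemma weight_d2_elem_supp:
  assumes y: "y \<in> coset_of code (v2 j1 j2 \<gamma>1 \<gamma>2)" "hw (q + 1) y = d - 2"
  shows "supp (q + 1) y \<subseteq> {..<q + 1} - {j1, j2}"
    and "(\<Prod>k\<in>supp (q + 1) y. ratio j1 j2 k) = - \<gamma>2 / \<gamma>1"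
proof -
  let ?v = "v2 j1 j2 \<gamma>1 \<gamma>2"
  let ?S = "supp (q + 1) y"
  have disj: "?S \<inter> {j1, j2} = {}"
    using weight_d2_elem_disjoint[OF v2_vec_props(1,2) d5 y] v2_vec_props(3) by simp
  then show S: "?S \<subseteq> {..<q + 1} - {j1, j2}"
    using supp_subset by blast
  let ?c = "\<lambda>j. y j - ?v j"
  have c: "?c \<in> code"
    using y(1) in_coset_iff[OF v2_vec_props(1)] by blast
  have supp_c: "supp (q + 1) ?c \<subseteq> ?S \<union> {j1, j2}"
    using supp_diff_subset v2_vec_props(3) by blast
  have "y j1 = 0" "y j2 = 0"
    using disj j by (auto simp: supp_def)
  then have cj: "?c j1 = - \<gamma>1" "?c j2 = - \<gamma>2"
    using j by (simp_all add: v2_def)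
  have "(\<Prod>k\<in>?S. bracket j1 k) * \<gamma>1 + (\<Prod>k\<in>?S. bracket j2 k) * \<gamma>2
      = - ((\<Prod>k\<in>?S. bracket j1 k) * - \<gamma>1 + (\<Prod>k\<in>?S. bracket j2 k) * - \<gamma>2)"
    by (simp add: algebra_simps)
  also have "\<dots> = - ((\<Prod>k\<in>?S. bracket j1 k) * ?c j1 + (\<Prod>k\<in>?S. bracket j2 k) * ?c j2)"
    by (simp only: cj)
  also have "\<dots> = 0"
    using pair_relation[OF c S _ supp_c] y(2) by (simp add: hw_eq_card_supp)
  finally have "(\<Prod>k\<in>?S. bracket j1 k) = - \<gamma>2 / \<gamma>1 * (\<Prod>k\<in>?S. bracket j2 k)"
    using \<gamma> by (simp add: field_simps add_eq_0_iff2)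
  then show "(\<Prod>k\<in>?S. ratio j1 j2 k) = - \<gamma>2 / \<gamma>1"
    using prod_bracket_nonzero[OF S] by (simp add: prod_ratio)
qed

lemma exists_codeword_on_pair:
  assumes S: "S \<subseteq> {..<q + 1} - {j1, j2}" "card S = d - 2"
  obtains c where "c \<in> code" "c j1 \<noteq> 0" "supp (q + 1) c \<subseteq> S \<union> {j1, j2}"
proof -
  have fS: "finite S"
    using S finite_subset by blast
  have "card (S \<union> {j1, j2}) = card S + card {j1, j2}"
    using fS S(1) by (intro card_Un_disjoint) auto
  then have "card (S \<union> {j1, j2}) = d"
    using S(2) j(3) d5 by simp
  then obtain c where c: "c \<in> code" "c \<noteq> (\<lambda>_. 0)" "supp (q + 1) c \<subseteq> S \<union> {j1, j2}"
    using exists_nonzero_codeword_supported_on[of "S \<union> {j1, j2}"] S j by auto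
  have "c j1 \<noteq> 0"
  proof
    assume "c j1 = 0"
    then have "supp (q + 1) c \<subseteq> insert j2 S"
      using c(3) by (auto simp: supp_def)
    moreover have "card (insert j2 S) \<le> Suc (card S)"
      using fS by (simp add: card_insert_if)
    then have "card (insert j2 S) < d"
      using S(2) d5 by presburger
    ultimately show False
      using codeword_eq_zero[OF c(1), of "insert j2 S"] c(2) fS by simp
  qed
  with c that show thesis
    by blast
qed

lemma exists_codeword_with_values:
  assumes S: "S \<subseteq> {..<q + 1} - {j1, j2}" "card S = d - 2"
    and prod: "(\<Prod>k\<in>S. ratio j1 j2 k) = - \<gamma>2 / \<gamma>1"
  obtains c where "c \<in> code" "c j1 = - \<gamma>1" "c j2 = - \<gamma>2" "supp (q + 1) c \<subseteq> S \<union> {j1, j2}"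
proof -
  let ?P1 = "\<Prod>k\<in>S. bracket j1 k" and ?P2 = "\<Prod>k\<in>S. bracket j2 k"
  obtain c where c: "c \<in> code" "c j1 \<noteq> 0" "supp (q + 1) c \<subseteq> S \<union> {j1, j2}"
    using exists_codeword_on_pair[OF S] by blast
  have "?P2 * c j2 = - (?P1 * c j1)"
    using pair_relation[OF c(1) S c(3)] by (simp add: add_eq_0_iff)
  then have c_j2: "c j2 = - (?P1 * c j1) / ?P2"
    using prod_bracket_nonzero[OF S(1)] by (simp add: field_simps)
  define c' where "c' = (\<lambda>j. (- \<gamma>1 / c j1) * c j)"
  have "?P2 \<noteq> 0"
    using prod_bracket_nonzero[OF S(1), of j2] by simp
  then have "c' j2 = - \<gamma>2"
    using c(2) prod \<gamma> by (simp add: c'_def c_j2 prod_ratio field_simps)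
  moreover have "c' \<in> code"
    unfolding c'_def by (rule code_smult[OF c(1)])
  moreover have "c' j1 = - \<gamma>1"
    using c(2) by (simp add: c'_def)
  moreover have "supp (q + 1) c' \<subseteq> S \<union> {j1, j2}"
    using c(3) by (auto simp: c'_def supp_def)
  ultimately show thesis
    using that by blast
qed

text \<open>Adding to \<open>v2 j1 j2 \<gamma>1 \<gamma>2\<close> the codeword that cancels it leaves a vector supported
  inside \<open>S\<close>, which must be all of \<open>S\<close> because the coset has no other vector of weight below \<open>d - 2\<close>.\<close>

lemma exists_weight_d2_elem:
  assumes S: "S \<subseteq> {..<q + 1} - {j1, j2}" "card S = d - 2"
    and prod: "(\<Prod>k\<in>S. ratio j1 j2 k) = - \<gamma>2 / \<gamma>1"
  shows "\<exists>y\<in>coset_of code (v2 j1 j2 \<gamma>1 \<gamma>2). supp (q + 1) y = S"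
proof -
  let ?v = "v2 j1 j2 \<gamma>1 \<gamma>2"
  obtain c where c: "c \<in> code" "c j1 = - \<gamma>1" "c j2 = - \<gamma>2" "supp (q + 1) c \<subseteq> S \<union> {j1, j2}"
    using exists_codeword_with_values[OF S prod] by blast
  define y where "y = (\<lambda>j. ?v j + c j)"
  have y: "y \<in> coset_of code ?v"
    using c(1) by (auto simp: coset_of_def y_def)
  have y_j: "y j1 = 0" "y j2 = 0"
    using c(2,3) j(3) by (simp_all add: y_def v2_def)
  have "supp (q + 1) y \<subseteq> S"
  proof
    fix k assume k: "k \<in> supp (q + 1) y"
    then have "k \<noteq> j1" "k \<noteq> j2"
      using y_j by (auto simp: supp_def)
    with k c(4) show "k \<in> S"
      by (auto simp: supp_def y_def v2_def)
  qed
  moreover have "y \<noteq> ?v"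
    using y_j j \<gamma> by (auto simp: v2_def fun_eq_iff)
  then have "\<not> hw (q + 1) y + 2 < d"
    using coset_elem_eq_if_low_weight[OF v2_vec_props(1) y] v2_vec_props(2) by auto
  then have "card S \<le> card (supp (q + 1) y)"
    using S(2) by (simp add: hw_eq_card_supp)
  ultimately have "supp (q + 1) y = S"
    using card_seteq[OF finite_subset[OF S(1)]] by blast
  with y show ?thesis
    by blast
qed

lemma B_weight_d2_coset:
  "B (q + 1) (d - 2) (coset_of code (v2 j1 j2 \<gamma>1 \<gamma>2)) = Ptimes (d - 2) (- \<gamma>2 / \<gamma>1)"
proof -
  let ?V = "coset_of code (v2 j1 j2 \<gamma>1 \<gamma>2)"
  let ?D = "{y \<in> ?V. hw (q + 1) y = d - 2}"
  let ?Sets = "{S. S \<subseteq> {..<q + 1} - {j1, j2} \<and> card S = d - 2 \<and> (\<Prod>k\<in>S. ratio j1 j2 k) = - \<gamma>2 / \<gamma>1}"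
  have "inj_on (supp (q + 1)) ?D"
    by (rule inj_on_subset[OF inj_on_supp_coset[OF v2_vec_props(1)]]) (use d5 in auto)
  moreover have "supp (q + 1) ` ?D = ?Sets"
  proof (intro set_eqI iffI)
    fix S assume "S \<in> supp (q + 1) ` ?D"
    then obtain y where y: "y \<in> ?V" "hw (q + 1) y = d - 2" "S = supp (q + 1) y"
      by blast
    then show "S \<in> ?Sets"
      using weight_d2_elem_supp[OF y(1,2)] by (simp add: hw_eq_card_supp)
  next
    fix S assume "S \<in> ?Sets"
    then have S: "S \<subseteq> {..<q + 1} - {j1, j2}" "card S = d - 2" "(\<Prod>k\<in>S. ratio j1 j2 k) = - \<gamma>2 / \<gamma>1"
      by auto
    then obtain y where y: "y \<in> ?V" "supp (q + 1) y = S"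
      using exists_weight_d2_elem by blast
    then have "y \<in> ?D"
      using S(2) by (simp add: hw_eq_card_supp)
    with y(2) show "S \<in> supp (q + 1) ` ?D"
      by blast
  qed
  ultimately have "card ?D = card ?Sets"
    using card_image by fastforce
  also have "card ?Sets = Ptimes (d - 2) (- \<gamma>2 / \<gamma>1)"
    by (rule card_subsets_prod_eq_Ptimes[OF bij_betw_ratio[OF j]])
  finally show ?thesis
    by (simp add: B_def)
qed

end

lemma same_wd_v2_cosets:
  assumes j: "j1 < q + 1" "j2 < q + 1" "j1 \<noteq> j2" and \<gamma>: "\<gamma>1 \<noteq> 0" "\<gamma>2 \<noteq> 0" and d5: "5 \<le> d"
  shows "\<forall>j1' j2'. j1' < q + 1 \<and> j2' < q + 1 \<and> j1' \<noteq> j2' \<longrightarrow>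
    same_wd (q + 1) (coset_of code (v2 j1 j2 \<gamma>1 \<gamma>2)) (coset_of code (v2 j1' j2' \<gamma>1 \<gamma>2))"
proof (intro allI impI)
  fix j1' j2' assume "j1' < q + 1 \<and> j2' < q + 1 \<and> j1' \<noteq> j2'"
  then have j': "j1' < q + 1" "j2' < q + 1" "j1' \<noteq> j2'"
    by auto
  show "same_wd (q + 1) (coset_of code (v2 j1 j2 \<gamma>1 \<gamma>2)) (coset_of code (v2 j1' j2' \<gamma>1 \<gamma>2))"
    using weight2_cosets_same_wd_iff[OF v2_vec_props(1,2)[OF j \<gamma> d5] v2_vec_props(1,2)[OF j' \<gamma> d5]]
      B_weight_d2_coset[OF j \<gamma> d5] B_weight_d2_coset[OF j' \<gamma> d5] d5
    by simp
qed

end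

locale gdrs_primitive = gdrs m q d + primitive_element \<beta>
  for m :: "nat \<Rightarrow> 'a::{field,finite}" and q d :: nat and \<beta> :: 'a +
  assumes five_le_d: "5 \<le> d" and d_le_q: "d \<le> q"
begin

lemma Pplus_eq_Ptimes_power: "l < q - 1 \<Longrightarrow> Pplus (q - 1) \<mu> l = Ptimes \<mu> (\<beta> ^ l)"
  using Pplus_eq_Ptimes card_field by simp

lemma weight2_coset_B_d2_eq_Pplus:
  assumes "is_coset (q + 1) code U" "coset_weight (q + 1) U = 2"
  obtains l where "l < q - 1" "B (q + 1) (d - 2) U = Pplus (q - 1) (d - 2) l"
proof -
  obtain j1 j2 \<gamma>1 \<gamma>2 where j: "j1 < q + 1" "j2 < q + 1" "j1 \<noteq> j2" and \<gamma>: "\<gamma>1 \<noteq> 0" "\<gamma>2 \<noteq> 0"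
    and U: "U = coset_of code (v2 j1 j2 \<gamma>1 \<gamma>2)"
    using weight2_coset_repr[OF assms] by metis
  have "- \<gamma>2 / \<gamma>1 \<in> (\<lambda>k. \<beta> ^ k) ` {..<q - 1}"
    using bij_betw_power \<gamma> card_field by (simp add: bij_betw_def)
  then obtain l where "l < q - 1" "\<beta> ^ l = - \<gamma>2 / \<gamma>1"
    by auto
  with that show thesis
    using B_weight_d2_coset[OF j \<gamma> five_le_d] Pplus_eq_Ptimes_power U by simp
qed

lemma weight2_test_coset:
  assumes "l < q - 1"
  shows "is_coset (q + 1) code (coset_of code (v2 0 1 1 (- (\<beta> ^ l))))"
    and "coset_weight (q + 1) (coset_of code (v2 0 1 1 (- (\<beta> ^ l)))) = 2"
    and "B (q + 1) (d - 2) (coset_of code (v2 0 1 1 (- (\<beta> ^ l)))) = Pplus (q - 1) (d - 2) l"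
proof -
  have v: "v2 0 1 1 (- (\<beta> ^ l)) \<in> vecs (q + 1)" "hw (q + 1) (v2 0 1 (1 :: 'a) (- (\<beta> ^ l))) = 2"
    using nonzero d_le_q five_le_d by (simp_all add: v2_in_vecs hw_v2)
  then show "is_coset (q + 1) code (coset_of code (v2 0 1 1 (- (\<beta> ^ l))))"
    by (auto simp: is_coset_def)
  show "coset_weight (q + 1) (coset_of code (v2 0 1 1 (- (\<beta> ^ l)))) = 2"
    using coset_weight_eq_hw[OF v(1)] v(2) five_le_d by simp
  show "B (q + 1) (d - 2) (coset_of code (v2 0 1 1 (- (\<beta> ^ l)))) = Pplus (q - 1) (d - 2) l"
    using B_weight_d2_coset[of 0 1 1 "- (\<beta> ^ l)"] nonzero d_le_q five_le_d Pplus_eq_Ptimes_power[OF assms]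
    by simp
qed

lemma all_weight2_cosets_same_wd_iff:
  "all_cosets_same_wd (q + 1) code 2
    \<longleftrightarrow> (\<forall>l1<q - 1. \<forall>l2<q - 1. Pplus (q - 1) (d - 2) l1 = Pplus (q - 1) (d - 2) l2)"
proof
  assume same: "all_cosets_same_wd (q + 1) code 2"
  show "\<forall>l1<q - 1. \<forall>l2<q - 1. Pplus (q - 1) (d - 2) l1 = Pplus (q - 1) (d - 2) l2"
  proof (intro allI impI)
    fix l1 l2 assume l: "l1 < q - 1" "l2 < q - 1"
    let ?U1 = "coset_of code (v2 0 1 1 (- (\<beta> ^ l1)))" and ?U2 = "coset_of code (v2 0 1 1 (- (\<beta> ^ l2)))"
    have "same_wd (q + 1) ?U1 ?U2"
      using same weight2_test_coset(1,2)[OF l(1)] weight2_test_coset(1,2)[OF l(2)]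
      unfolding all_cosets_same_wd_def by blast
    then show "Pplus (q - 1) (d - 2) l1 = Pplus (q - 1) (d - 2) l2"
      using weight2_test_coset(3)[OF l(1)] weight2_test_coset(3)[OF l(2)] by (simp add: same_wd_def)
  qed
next
  assume const: "\<forall>l1<q - 1. \<forall>l2<q - 1. Pplus (q - 1) (d - 2) l1 = Pplus (q - 1) (d - 2) l2"
  show "all_cosets_same_wd (q + 1) code 2"
    unfolding all_cosets_same_wd_def
  proof (intro allI impI)
    fix U U' assume "is_coset (q + 1) code U \<and> is_coset (q + 1) code U'
      \<and> coset_weight (q + 1) U = 2 \<and> coset_weight (q + 1) U' = 2"
    then have U: "is_coset (q + 1) code U" "coset_weight (q + 1) U = 2"
      and U': "is_coset (q + 1) code U'" "coset_weight (q + 1) U' = 2"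
      by auto
    obtain y where y: "y \<in> vecs (q + 1)" "hw (q + 1) y = 2" "U = coset_of code y"
      using coset_weight_attained[OF U(1)] U(2) by metis
    obtain y' where y': "y' \<in> vecs (q + 1)" "hw (q + 1) y' = 2" "U' = coset_of code y'"
      using coset_weight_attained[OF U'(1)] U'(2) by metis
    obtain l where l: "l < q - 1" "B (q + 1) (d - 2) U = Pplus (q - 1) (d - 2) l"
      using weight2_coset_B_d2_eq_Pplus[OF U] by blast
    obtain l' where l': "l' < q - 1" "B (q + 1) (d - 2) U' = Pplus (q - 1) (d - 2) l'"
      using weight2_coset_B_d2_eq_Pplus[OF U'] by blast
    have "Pplus (q - 1) (d - 2) l = Pplus (q - 1) (d - 2) l'"
      using const l(1) l'(1) by blast
    then have "B (q + 1) (d - 2) U = B (q + 1) (d - 2) U'"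
      using l(2) l'(2) by simp
    then show "same_wd (q + 1) U U'"
      using weight2_cosets_same_wd_iff[OF y(1,2) y'(1,2)] y(3) y'(3) five_le_d by simp
  qed
qed

lemma binomial_avg_eq:
  "real ((q - 1) choose (d - 2)) / real (q - 1) = real ((q - 2) choose (d - 3)) / real (d - 2)"
  using binomial_div_eq[of "d - 2" "q - 1"] five_le_d d_le_q by (simp add: numeral_eq_Suc)

lemma weight2_coset_B_formula:
  assumes v: "v \<in> vecs (q + 1)" "hw (q + 1) v = 2" and w: "d - 1 \<le> w" "w \<le> q + 1"
  shows "int (B (q + 1) w (coset_of code v)) = int (B (q + 1) w code) - Omega0 q d w + Omega2 q d w
    + neg1pow (int w - int d) * int ((q + 3 - d) choose (q + 1 - w)) * int (B (q + 1) (d - 2) (coset_of code v))"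
  using B_weight2_coset_formula[OF v five_le_d w(1)] Omega_d2_eq[OF w] five_le_d
    Omega_0_eq_Omega0[of q d w] Omega_2_eq_Omega2[of q d w]
  by simp

lemma v2_coset_weight_distribution:
  assumes j: "j1 < q + 1" "j2 < q + 1" "j1 \<noteq> j2" and \<gamma>: "\<gamma>1 \<noteq> 0" "\<gamma>2 \<noteq> 0"
    and l: "l < q - 1" "\<beta> ^ l = - \<gamma>2 / \<gamma>1"
  defines "V \<equiv> coset_of code (v2 j1 j2 \<gamma>1 \<gamma>2)"
  shows "(\<forall>w. w \<le> d - 3 \<and> w \<noteq> 2 \<longrightarrow> B (q + 1) w V = 0)"
    and "B (q + 1) 2 V = 1"
    and "B (q + 1) (d - 2) V = Pplus (q - 1) (d - 2) l"
    and "\<forall>w. d - 1 \<le> w \<and> w \<le> q + 1 \<longrightarrow> int (B (q + 1) w V) = int (B (q + 1) w code)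
      - Omega0 q d w + Omega2 q d w
      + neg1pow (int w - int d) * int ((q + 3 - d) choose (q + 1 - w)) * int (Pplus (q - 1) (d - 2) l)"
proof -
  have v: "v2 j1 j2 \<gamma>1 \<gamma>2 \<in> vecs (q + 1)" "hw (q + 1) (v2 j1 j2 \<gamma>1 \<gamma>2) = 2"
    using j \<gamma> by (simp_all add: v2_in_vecs hw_v2)
  show "\<forall>w. w \<le> d - 3 \<and> w \<noteq> 2 \<longrightarrow> B (q + 1) w V = 0" "B (q + 1) 2 V = 1"
    unfolding V_def using B_coset_low_weight[OF v(1)] v(2) five_le_d by auto
  show B_d2: "B (q + 1) (d - 2) V = Pplus (q - 1) (d - 2) l"
    unfolding V_def using B_weight_d2_coset[OF j \<gamma> five_le_d] Pplus_eq_Ptimes_power[OF l(1)] l(2) by simp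
  show "\<forall>w. d - 1 \<le> w \<and> w \<le> q + 1 \<longrightarrow> int (B (q + 1) w V) = int (B (q + 1) w code)
      - Omega0 q d w + Omega2 q d w
      + neg1pow (int w - int d) * int ((q + 3 - d) choose (q + 1 - w)) * int (Pplus (q - 1) (d - 2) l)"
    using weight2_coset_B_formula[OF v] B_d2 unfolding V_def by simp
qed

lemma weight2_coset_formulas_ii:
  assumes const: "\<forall>l1<q - 1. \<forall>l2<q - 1. Pplus (q - 1) (d - 2) l1 = Pplus (q - 1) (d - 2) l2"
    and U: "is_coset (q + 1) code U" "coset_weight (q + 1) U = 2"
  shows "formulas_ii q d code U"
proof -
  obtain y where y: "y \<in> vecs (q + 1)" "hw (q + 1) y = 2" "U = coset_of code y"
    using coset_weight_attained[OF U(1)] U(2) by metis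
  obtain l where l: "l < q - 1" "B (q + 1) (d - 2) U = Pplus (q - 1) (d - 2) l"
    using weight2_coset_B_d2_eq_Pplus[OF U] by metis
  let ?avg = "real ((q - 1) choose (d - 2)) / real (q - 1)"
  have "(q - 1) * Pplus (q - 1) (d - 2) l = (q - 1) choose (d - 2)"
    using Pplus_eq_binomial_div[OF _ const l(1)] l(1) by simp
  then have "real (Pplus (q - 1) (d - 2) l) * real (q - 1) = real ((q - 1) choose (d - 2))"
    by (metis of_nat_mult mult.commute)
  then have avg: "real (B (q + 1) (d - 2) U) = ?avg"
    using l d_le_q five_le_d by (simp add: eq_divide_eq)
  have heavy: "real (B (q + 1) w U) = real_of_int (int (B (q + 1) w code) - Omega0 q d w + Omega2 q d w)
      + real_of_int (neg1pow (int w - int d) * int ((q + 3 - d) choose (q + 1 - w))) * ?avg"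
    if "d - 1 \<le> w" "w \<le> q + 1" for w
  proof -
    have "real_of_int (int (B (q + 1) w U)) = real_of_int (int (B (q + 1) w code) - Omega0 q d w + Omega2 q d w)
        + real_of_int (neg1pow (int w - int d) * int ((q + 3 - d) choose (q + 1 - w))) * real (B (q + 1) (d - 2) U)"
      using weight2_coset_B_formula[OF y(1,2) that] y(3) by simp
    then show ?thesis
      using avg by simp
  qed
  show ?thesis
    unfolding formulas_ii_def
  proof (intro conjI allI impI)
    fix w assume w: "w \<le> d - 3 \<and> w \<noteq> 2"
    then have "w + hw (q + 1) y < d"
      using y(2) five_le_d by linarith
    with w show "B (q + 1) w U = 0"
      using B_coset_low_weight[OF y(1), of w] y(2,3) by simp
  next
    show "B (q + 1) 2 U = 1"
      using B_coset_low_weight[OF y(1), of 2] y five_le_d by simp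
  next
    fix w assume "d - 1 \<le> w \<and> w \<le> q + 1"
    then show "real (B (q + 1) w U) = real_of_int (int (B (q + 1) w code) - Omega0 q d w + Omega2 q d w)
      + real_of_int (neg1pow (int w - int d) * int ((q + 3 - d) choose (q + 1 - w))) * ?avg"
      using heavy by blast
  qed (fact avg binomial_avg_eq)+
qed

lemma coprime_imp_two_regular:
  assumes "gcd (q - 1) (d - 2) = 1"
  shows "(\<forall>l1<q - 1. \<forall>l2<q - 1. Pplus (q - 1) (d - 2) l1 = Pplus (q - 1) (d - 2) l2)
    \<and> all_cosets_same_wd (q + 1) code 2
    \<and> (\<forall>U. is_coset (q + 1) code U \<and> coset_weight (q + 1) U = 2 \<longrightarrow> formulas_ii q d code U)
    \<and> two_regular (q + 1) code
    \<and> (q - 1) dvd ((q - 1) choose (d - 2))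
    \<and> real ((q - 1) choose (d - 2)) / real (q - 1) = real ((q - 2) choose (d - 3)) / real (d - 2)"
proof -
  have "coprime (q - 1) (d - 2)"
    using assms by (simp add: coprime_iff_gcd_eq_1)
  then have const: "\<forall>l1<q - 1. \<forall>l2<q - 1. Pplus (q - 1) (d - 2) l1 = Pplus (q - 1) (d - 2) l2"
    using Pplus_eq_if_coprime by blast
  then have same: "all_cosets_same_wd (q + 1) code 2"
    using all_weight2_cosets_same_wd_iff by blast
  then have "two_regular (q + 1) code"
    using two_regular_iff five_le_d by simp
  moreover have "(q - 1) * Pplus (q - 1) (d - 2) 0 = (q - 1) choose (d - 2)"
    using Pplus_eq_binomial_div[OF _ const] five_le_d d_le_q by simp
  then have "(q - 1) dvd ((q - 1) choose (d - 2))"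
    by (metis dvd_triv_left)
  ultimately show ?thesis
    using const same weight2_coset_formulas_ii binomial_avg_eq by blast
qed

end

theorem theorem5p1:
  fixes m :: "nat \<Rightarrow> 'a::{field,finite}"
    and d j1 j2 l0 :: nat
    and \<gamma>1 \<gamma>2 \<beta> :: 'a
  defines "q \<equiv> card (UNIV :: 'a set)"
  defines "n \<equiv> q + 1"
  defines "C \<equiv> gdrs_code m q d"
  defines "V \<equiv> coset_of C (v2 j1 j2 \<gamma>1 \<gamma>2)"
  assumes enum: "bij_betw m {..<q} (UNIV :: 'a set)" and mq: "m (q - 1) = 0"
    and d5: "5 \<le> d" and dq: "d \<le> q"
    and j: "j1 < n" "j2 < n" "j1 \<noteq> j2"
    and g: "\<gamma>1 \<noteq> 0" "\<gamma>2 \<noteq> 0"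
    and Vw: "coset_weight n V = 2"
    and prim: "\<forall>x::'a. x \<noteq> 0 \<longrightarrow> (\<exists>k::nat. \<beta> ^ k = x)"
    and l0: "l0 < q - 1" "\<beta> ^ l0 = - \<gamma>2 / \<gamma>1"
  shows
    "(\<forall>j1' j2'. j1' < n \<and> j2' < n \<and> j1' \<noteq> j2' \<longrightarrow>
        same_wd n V (coset_of C (v2 j1' j2' \<gamma>1 \<gamma>2)))
   \<and> (\<forall>w. w \<le> d - 3 \<and> w \<noteq> 2 \<longrightarrow> B n w V = 0)
   \<and> B n 2 V = 1
   \<and> B n (d - 2) V = Pplus (q - 1) (d - 2) l0
   \<and> Pplus (q - 1) (d - 2) l0 = Ptimes (d - 2) (- \<gamma>2 / \<gamma>1)
   \<and> (\<forall>w. d - 1 \<le> w \<and> w \<le> q + 1 \<longrightarrow>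
        int (B n w V) = int (B n w C) - Omega0 q d w + Omega2 q d w
          + neg1pow (int w - int d) * int ((q + 3 - d) choose (q + 1 - w))
            * int (Pplus (q - 1) (d - 2) l0))
   \<and> card {U. is_coset n C U \<and> coset_weight n U = 2} = (n choose 2) * (q - 1) ^ 2
   \<and> ((\<forall>l1 < q - 1. \<forall>l2 < q - 1. Pplus (q - 1) (d - 2) l1 = Pplus (q - 1) (d - 2) l2)
        \<longleftrightarrow> all_cosets_same_wd n C 2)
   \<and> (all_cosets_same_wd n C 2 \<longrightarrow>
        (\<forall>U. is_coset n C U \<and> coset_weight n U = 2 \<longrightarrow> formulas_ii q d C U))
   \<and> (gcd (q - 1) (d - 2) = 1 \<longrightarrow>
        (\<forall>l1 < q - 1. \<forall>l2 < q - 1. Pplus (q - 1) (d - 2) l1 = Pplus (q - 1) (d - 2) l2)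
        \<and> all_cosets_same_wd n C 2
        \<and> (\<forall>U. is_coset n C U \<and> coset_weight n U = 2 \<longrightarrow> formulas_ii q d C U)
        \<and> two_regular n C
        \<and> (q - 1) dvd ((q - 1) choose (d - 2))
        \<and> real ((q - 1) choose (d - 2)) / real (q - 1) = real ((q - 2) choose (d - 3)) / real (d - 2))"
proof -
  have "primitive_element \<beta>"
    using primitive_elementI[of \<beta>] prim d5 dq q_def by simp
  then interpret gdrs_primitive m q d \<beta>
    using enum d5 dq q_def by (simp add: gdrs_primitive_def gdrs_def gdrs_primitive_axioms_def)
  have n: "n = q + 1" and C: "C = code"
    by (simp_all add: n_def C_def gdrs_code_eq_parity_code)
  have j': "j1 < q + 1" "j2 < q + 1" "j1 \<noteq> j2"
    using j by (simp_all add: n)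
  have Ptimes_l0: "Pplus (q - 1) (d - 2) l0 = Ptimes (d - 2) (- \<gamma>2 / \<gamma>1)"
    using Pplus_eq_Ptimes_power[OF l0(1)] l0(2) by simp
  have formulas: "all_cosets_same_wd (q + 1) code 2 \<longrightarrow>
      (\<forall>U. is_coset (q + 1) code U \<and> coset_weight (q + 1) U = 2 \<longrightarrow> formulas_ii q d code U)"
    using all_weight2_cosets_same_wd_iff weight2_coset_formulas_ii by blast
  show ?thesis
    unfolding V_def n C
    using same_wd_v2_cosets[OF j' g d5] v2_coset_weight_distribution[OF j' g l0] Ptimes_l0
      card_weight2_cosets[OF d5, unfolded card_field] all_weight2_cosets_same_wd_iff formulas
      coprime_imp_two_regular
    by blast
qed

end
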